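(* Let $\Omega\subset\mathbb{R}^N$ be a bounded smooth domain and $f$ a Carath\'eodory function satisfying $(f_1)$: for a.e. $x$, $t\mapsto f(x,t)/t$ is increasing on $(0,\infty)$ and decreasing on $(-\infty,0)$, $\alpha(x):=\lim_{t\to0}f(x,t)/t\ge0$ and $\eta(x):=\lim_{|t|\to\infty}f(x,t)/t$ exist a.e. and lie in $L^\infty(\Omega)$; and $(f_2)$: $\lambda_m(\eta)<1<\lambda_1(\alpha)$ for some $m\ge1$. Then: (i) $\mathcal A$ is open and nonempty; (ii) $\partial\mathcal A=\{u\in H_0^1(\Omega):\|u\|^2=\int_\Omega\eta u^2dx\}$; (iii) $\mathcal A^c=\{u\in H_0^1(\Omega):\|u\|^2\ge\int_\Omega\eta u^2dx\}$; (iv) $\mathcal N\subset\mathcal A$; (v) $\mathcal S\cap\mathcal A\neq\emptyset$.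
   Context: $\|u\|^2=\int_\Omega|\nabla u|^2dx$ on $H_0^1(\Omega)$. For $\theta\in L^\infty(\Omega)$, $\lambda_1(\theta)<\lambda_2(\theta)<\cdots$ are the distinct positive eigenvalues of $-\Delta u=\lambda\theta u$ in $\Omega$, $u=0$ on $\partial\Omega$, with $\lambda_1(0)=\infty$. $\mathcal N=\{u\in H_0^1(\Omega)\setminus\{0\}:\|u\|^2=\int_\Omega f(x,u)u\,dx\}$, $\mathcal S$ the unit sphere of $H_0^1(\Omega)$, $\mathcal A=\{u\in H_0^1(\Omega):\|u\|^2<\int_\Omega\eta u^2dx\}$; $\partial\mathcal A$ and $\mathcal A^c$ are its boundary and complement in $H_0^1(\Omega)$. *)

theory Defs
  imports "HOL-Analysis.Analysis"
begin

fun iter_pd :: "'a::euclidean_space list \<Rightarrow> ('a \<Rightarrow> real) \<Rightarrow> 'a \<Rightarrow> real" where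
  "iter_pd [] f = f"
| "iter_pd (v # vs) f = (\<lambda>x. frechet_derivative (iter_pd vs f) (at x) v)"

definition smooth_on :: "'a::euclidean_space set \<Rightarrow> ('a \<Rightarrow> real) \<Rightarrow> bool" where
  "smooth_on U f \<longleftrightarrow> (\<forall>vs. set vs \<subseteq> Basis \<longrightarrow> iter_pd vs f differentiable_on U)"

definition smooth_bounded_domain :: "'a::euclidean_space set \<Rightarrow> bool" where
  "smooth_bounded_domain \<Omega> \<longleftrightarrow> open \<Omega> \<and> connected \<Omega> \<and> bounded \<Omega> \<and> \<Omega> \<noteq> {} \<and>
     (\<forall>p\<in>frontier \<Omega>. \<exists>U \<phi>. open U \<and> p \<in> U \<and> smooth_on U \<phi> \<and>
        (\<forall>x\<in>U. frechet_derivative \<phi> (at x) \<noteq> (\<lambda>_. 0)) \<and>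
        \<Omega> \<inter> U = {x\<in>U. \<phi> x < 0})"

definition grad :: "('a::euclidean_space \<Rightarrow> real) \<Rightarrow> 'a \<Rightarrow> 'a" where
  "grad \<phi> x = (\<Sum>b\<in>Basis. frechet_derivative \<phi> (at x) b *\<^sub>R b)"

definition test_fun :: "'a::euclidean_space set \<Rightarrow> ('a \<Rightarrow> real) \<Rightarrow> bool" where
  "test_fun \<Omega> \<phi> \<longleftrightarrow> smooth_on UNIV \<phi> \<and> compact (closure {x. \<phi> x \<noteq> 0}) \<and>
     closure {x. \<phi> x \<noteq> 0} \<subseteq> \<Omega>"

definition H01_pair :: "'a::euclidean_space set \<Rightarrow> ('a \<Rightarrow> real) \<Rightarrow> ('a \<Rightarrow> 'a) \<Rightarrow> bool" where
  "H01_pair \<Omega> u g \<longleftrightarrow>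
     u \<in> borel_measurable (lebesgue_on \<Omega>) \<and> g \<in> borel_measurable (lebesgue_on \<Omega>) \<and>
     (\<exists>\<phi>::nat \<Rightarrow> 'a \<Rightarrow> real. (\<forall>n. test_fun \<Omega> (\<phi> n)) \<and>
        (\<forall>n. integrable (lebesgue_on \<Omega>) (\<lambda>x. (\<phi> n x - u x)^2)) \<and>
        (\<forall>n. integrable (lebesgue_on \<Omega>) (\<lambda>x. (norm (grad (\<phi> n) x - g x))^2)) \<and>
        (\<lambda>n. integral\<^sup>L (lebesgue_on \<Omega>) (\<lambda>x. (\<phi> n x - u x)^2)) \<longlonglongrightarrow> 0 \<and>
        (\<lambda>n. integral\<^sup>L (lebesgue_on \<Omega>) (\<lambda>x. (norm (grad (\<phi> n) x - g x))^2)) \<longlonglongrightarrow> 0)"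

definition H01 :: "'a::euclidean_space set \<Rightarrow> ('a \<Rightarrow> real) set" where
  "H01 \<Omega> = {u. \<exists>g. H01_pair \<Omega> u g}"

definition wgrad :: "'a::euclidean_space set \<Rightarrow> ('a \<Rightarrow> real) \<Rightarrow> 'a \<Rightarrow> 'a" where
  "wgrad \<Omega> u = (SOME g. H01_pair \<Omega> u g)"

definition hnorm2 :: "'a::euclidean_space set \<Rightarrow> ('a \<Rightarrow> real) \<Rightarrow> real" where
  "hnorm2 \<Omega> u = integral\<^sup>L (lebesgue_on \<Omega>) (\<lambda>x. (norm (wgrad \<Omega> u x))^2)"

text \<open>Topology of H_0^1 (elements are represented by functions; the norm only
  sees a.e. classes).\<close>
definition H_open :: "'a::euclidean_space set \<Rightarrow> ('a \<Rightarrow> real) set \<Rightarrow> bool" where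
  "H_open \<Omega> A \<longleftrightarrow> A \<subseteq> H01 \<Omega> \<and>
     (\<forall>u\<in>A. \<exists>e>0. \<forall>v\<in>H01 \<Omega>. hnorm2 \<Omega> (\<lambda>x. v x - u x) < e \<longrightarrow> v \<in> A)"

definition H_closure :: "'a::euclidean_space set \<Rightarrow> ('a \<Rightarrow> real) set \<Rightarrow> ('a \<Rightarrow> real) set" where
  "H_closure \<Omega> A = {u\<in>H01 \<Omega>. \<forall>e>0. \<exists>v\<in>A. hnorm2 \<Omega> (\<lambda>x. v x - u x) < e}"

definition H_interior :: "'a::euclidean_space set \<Rightarrow> ('a \<Rightarrow> real) set \<Rightarrow> ('a \<Rightarrow> real) set" where
  "H_interior \<Omega> A = {u\<in>A. \<exists>e>0. \<forall>v\<in>H01 \<Omega>. hnorm2 \<Omega> (\<lambda>x. v x - u x) < e \<longrightarrow> v \<in> A}"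

definition H_boundary :: "'a::euclidean_space set \<Rightarrow> ('a \<Rightarrow> real) set \<Rightarrow> ('a \<Rightarrow> real) set" where
  "H_boundary \<Omega> A = H_closure \<Omega> A - H_interior \<Omega> A"

definition is_eigenvalue :: "'a::euclidean_space set \<Rightarrow> ('a \<Rightarrow> real) \<Rightarrow> real \<Rightarrow> bool" where
  "is_eigenvalue \<Omega> \<theta> l \<longleftrightarrow> (\<exists>u\<in>H01 \<Omega>. \<not> (AE x in lebesgue_on \<Omega>. u x = 0) \<and>
     (\<forall>v\<in>H01 \<Omega>. integral\<^sup>L (lebesgue_on \<Omega>) (\<lambda>x. wgrad \<Omega> u x \<bullet> wgrad \<Omega> v x)
                = l * integral\<^sup>L (lebesgue_on \<Omega>) (\<lambda>x. \<theta> x * u x * v x)))"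

definition pos_eigs :: "'a::euclidean_space set \<Rightarrow> ('a \<Rightarrow> real) \<Rightarrow> real set" where
  "pos_eigs \<Omega> \<theta> = {l. l > 0 \<and> is_eigenvalue \<Omega> \<theta> l}"

text \<open>eig_aux k = the (k+1)-th smallest distinct positive eigenvalue (\<infinity> if none).\<close>
fun eig_aux :: "'a::euclidean_space set \<Rightarrow> ('a \<Rightarrow> real) \<Rightarrow> nat \<Rightarrow> ereal" where
  "eig_aux \<Omega> \<theta> 0 = Inf (ereal ` pos_eigs \<Omega> \<theta>)"
| "eig_aux \<Omega> \<theta> (Suc k) = Inf (ereal ` {l \<in> pos_eigs \<Omega> \<theta>. ereal l > eig_aux \<Omega> \<theta> k})"

text \<open>lambda_k(\<theta>) for k \<ge> 1; lambda_1(0) = \<infinity>.\<close>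
definition lambda_eig :: "'a::euclidean_space set \<Rightarrow> ('a \<Rightarrow> real) \<Rightarrow> nat \<Rightarrow> ereal" where
  "lambda_eig \<Omega> \<theta> k = eig_aux \<Omega> \<theta> (k - 1)"

definition caratheodory :: "'a::euclidean_space set \<Rightarrow> ('a \<Rightarrow> real \<Rightarrow> real) \<Rightarrow> bool" where
  "caratheodory \<Omega> f \<longleftrightarrow> (\<forall>t. (\<lambda>x. f x t) \<in> borel_measurable (lebesgue_on \<Omega>)) \<and>
     (AE x in lebesgue_on \<Omega>. continuous_on UNIV (f x))"

definition Linf :: "'a::euclidean_space set \<Rightarrow> ('a \<Rightarrow> real) \<Rightarrow> bool" where
  "Linf \<Omega> \<theta> \<longleftrightarrow> \<theta> \<in> borel_measurable (lebesgue_on \<Omega>) \<and>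
     (\<exists>C. AE x in lebesgue_on \<Omega>. \<bar>\<theta> x\<bar> \<le> C)"

definition nehari :: "'a::euclidean_space set \<Rightarrow> ('a \<Rightarrow> real \<Rightarrow> real) \<Rightarrow> ('a \<Rightarrow> real) set" where
  "nehari \<Omega> f = {u \<in> H01 \<Omega>. \<not> (AE x in lebesgue_on \<Omega>. u x = 0) \<and>
      hnorm2 \<Omega> u = integral\<^sup>L (lebesgue_on \<Omega>) (\<lambda>x. f x (u x) * u x)}"

definition unit_sphere :: "'a::euclidean_space set \<Rightarrow> ('a \<Rightarrow> real) set" where
  "unit_sphere \<Omega> = {u \<in> H01 \<Omega>. hnorm2 \<Omega> u = 1}"

definition setA :: "'a::euclidean_space set \<Rightarrow> ('a \<Rightarrow> real) \<Rightarrow> ('a \<Rightarrow> real) set" where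
  "setA \<Omega> \<eta> = {u \<in> H01 \<Omega>. hnorm2 \<Omega> u < integral\<^sup>L (lebesgue_on \<Omega>) (\<lambda>x. \<eta> x * (u x)^2)}"

end

theory Submission
  imports Defs
begin

(*
  Write Q(u) = ||u||^2 - \<integral> \<eta> u^2, so that A = {Q < 0}. Weak gradients are unique, so ||.||^2
  is a quadratic form on H_0^1 and Q(u + t v) is a quadratic polynomial in t; by Cauchy-Schwarz and
  the Poincare inequality Q is continuous. Hence A is open, its complement is {Q \<ge> 0}, and no
  point with Q > 0 lies in the closure of A. Since \<lambda>_m(\<eta>) < 1 there is an eigenvalue \<lambda> < 1 of
  weight \<eta>, and its eigenfunction u0 has Q(u0) = (\<lambda> - 1) \<integral> \<eta> u0^2 < 0. So A is nonempty, a
  multiple of u0 lies on the unit sphere, and every zero u of Q is the limit of points u + t u0 of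
  A, which identifies the boundary. Finally the monotonicity of f(x,t)/t gives f(x,t) t < \<eta>(x) t^2
  for t \<noteq> 0, whence N \<subseteq> A. Only openness and boundedness of \<Omega>, the bound on \<eta>, and the parts
  of (f_1) and (f_2) that involve \<eta> are used.
*)

section \<open>Compactly supported functions on Euclidean space\<close>

lemma frechet_derivative_eq_0_on_open:
  fixes F :: "'a::euclidean_space \<Rightarrow> real"
  assumes "open U" "x \<in> U" "\<And>y. y \<in> U \<Longrightarrow> F y = 0"
  shows "frechet_derivative F (at x) = (\<lambda>_. 0)"
proof -
  have "((\<lambda>_. 0::real) has_derivative (\<lambda>_. 0)) (at x)" by simp
  then have "(F has_derivative (\<lambda>_. 0)) (at x)"
    by (rule has_derivative_transform_within_open[OF _ assms(1,2)]) (use assms(3) in auto)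
  then show ?thesis by (rule frechet_derivative_at[symmetric])
qed

lemma has_derivative_eq_0_outside_closed:
  fixes F :: "'a::euclidean_space \<Rightarrow> real"
  assumes "(F has_derivative F') (at x)" "closed K" "x \<notin> K" "\<And>y. y \<notin> K \<Longrightarrow> F y = 0"
  shows "F' h = 0"
proof -
  have "F' = frechet_derivative F (at x)" using assms(1) by (rule frechet_derivative_at)
  also have "\<dots> = (\<lambda>_. 0)" using assms by (intro frechet_derivative_eq_0_on_open[of "- K"]) auto
  finally show ?thesis by simp
qed

lemma integrable_continuous_compact_support:
  fixes F :: "'a::euclidean_space \<Rightarrow> real"
  assumes "continuous_on UNIV F" "compact K" "\<And>x. x \<notin> K \<Longrightarrow> F x = 0"
  shows "integrable lborel F"
proof -
  have "integrable lborel (\<lambda>x. indicator K x *\<^sub>R F x)"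
    using assms by (intro borel_integrable_compact) (auto intro: continuous_on_subset)
  moreover have "(\<lambda>x. indicator K x *\<^sub>R F x) = F"
    using assms(3) by (intro ext) (auto simp: indicator_def)
  ultimately show ?thesis by simp
qed

lemma bounded_continuous_compact_support:
  fixes F :: "'a::euclidean_space \<Rightarrow> real"
  assumes "continuous_on UNIV F" "compact K" "\<And>x. x \<notin> K \<Longrightarrow> F x = 0"
  obtains B where "B \<ge> 0" "\<And>x. \<bar>F x\<bar> \<le> B"
proof -
  have "compact (F ` K)" using assms by (intro compact_continuous_image) (auto intro: continuous_on_subset)
  then obtain B where "\<forall>y\<in>F ` K. norm y \<le> B" using compact_imp_bounded bounded_iff by metis
  then have "\<bar>F x\<bar> \<le> max B 0" for x using assms(3) by (cases "x \<in> K") force+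
  then show thesis by (intro that[of "max B 0"]) auto
qed

lemma
  fixes w :: "'a::euclidean_space \<Rightarrow> real"
  assumes "w \<in> borel_measurable borel" "integrable lborel w"
  shows integrable_lborel_translate: "integrable lborel (\<lambda>x. w (x + c))"
    and integral_lborel_translate: "integral\<^sup>L lborel (\<lambda>x. w (x + c)) = integral\<^sup>L lborel w"
proof -
  have "integrable (distr lborel borel ((+) c)) w" using assms(2) by (simp add: lborel_distr_plus)
  then show "integrable lborel (\<lambda>x. w (x + c))"
    using assms(1) by (subst (asm) integrable_distr_eq) (auto simp: add.commute)
  have "integral\<^sup>L lborel w = integral\<^sup>L (distr lborel borel ((+) c)) w"
    by (simp add: lborel_distr_plus)
  also have "\<dots> = integral\<^sup>L lborel (\<lambda>x. w (c + x))"
    using assms(1) by (intro integral_distr) auto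
  finally show "integral\<^sup>L lborel (\<lambda>x. w (x + c)) = integral\<^sup>L lborel w" by (simp add: add.commute)
qed

lemma has_real_derivative_along_line:
  fixes w :: "'a::euclidean_space \<Rightarrow> real"
  assumes diff: "\<And>y. (w has_derivative w' y) (at y)"
  shows "((\<lambda>s. w (x + s *\<^sub>R e)) has_real_derivative w' (x + s *\<^sub>R e) e) (at s)"
proof -
  have "((\<lambda>s. x + s *\<^sub>R e) has_derivative (\<lambda>h. h *\<^sub>R e)) (at s)"
    by (auto intro!: derivative_eq_intros)
  from diff_chain_at[OF this diff]
  have "((\<lambda>s. w (x + s *\<^sub>R e)) has_derivative (\<lambda>h. w' (x + s *\<^sub>R e) (h *\<^sub>R e))) (at s)"
    by (simp add: o_def)
  moreover have "(\<lambda>h. w' (x + s *\<^sub>R e) (h *\<^sub>R e)) = (\<lambda>h. w' (x + s *\<^sub>R e) e * h)"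
    using has_derivative_bounded_linear[OF diff[of "x + s *\<^sub>R e"]]
    by (auto simp: linear_simps bounded_linear.linear)
  ultimately show ?thesis by (simp add: has_field_derivative_def)
qed

lemma LIMSEQ_difference_quotient:
  assumes "(g has_real_derivative D) (at 0)"
  shows "(\<lambda>n. (g (1 / real (Suc n)) - g 0) * real (Suc n)) \<longlonglongrightarrow> D"
proof -
  have "((\<lambda>s. (g s - g 0) / s) \<longlongrightarrow> D) (at 0)"
    using assms unfolding has_field_derivative_iff by simp
  moreover have "(\<lambda>n. 1 / real (Suc n)) \<longlonglongrightarrow> 0"
    using LIMSEQ_inverse_real_of_nat by (simp add: inverse_eq_divide)
  ultimately have "((\<lambda>s. (g s - g 0) / s) \<circ> (\<lambda>n. 1 / real (Suc n))) \<longlonglongrightarrow> D"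
    unfolding tendsto_at_iff_sequentially by auto
  then show ?thesis by (simp add: o_def)
qed

lemma difference_quotient_bounded:
  fixes g :: "real \<Rightarrow> real"
  assumes "\<And>s. (g has_real_derivative D s) (at s)" "\<And>s. \<bar>D s\<bar> \<le> B" "t > 0"
  shows "\<bar>(g t - g 0) / t\<bar> \<le> B"
proof -
  obtain z where "g t - g 0 = (t - 0) * D z"
    using MVT2[OF assms(3), of g D] assms(1) by blast
  then show ?thesis using assms(2)[of z] assms(3) by simp
qed

lemma integral_derivative_compact_support_eq_0:
  fixes w :: "'a::euclidean_space \<Rightarrow> real" and e :: 'a
  assumes diff: "\<And>x. (w has_derivative w' x) (at x)"
    and cont: "continuous_on UNIV (\<lambda>x. w' x e)"
    and K: "compact K" "\<And>x. x \<notin> K \<Longrightarrow> w x = 0"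
  shows "integral\<^sup>L lborel (\<lambda>x. w' x e) = 0"
proof -
  define d where "d x = w' x e" for x
  have d0: "d x = 0" if "x \<notin> K" for x
    unfolding d_def using has_derivative_eq_0_outside_closed[OF diff compact_imp_closed[OF K(1)] that K(2)] .
  have contw: "continuous_on UNIV w"
    using diff by (meson continuous_at_imp_continuous_on has_derivative_continuous)
  have dcont: "continuous_on UNIV d" using cont by (simp add: d_def[abs_def])
  obtain B where B: "B \<ge> 0" "\<And>x. \<bar>d x\<bar> \<le> B"
    using bounded_continuous_compact_support[OF dcont K(1) d0] by blast
  txt \<open>The difference quotients q n of w in direction e integrate to 0 by translation
    invariance of lborel, are supported in the compact set K2 and tend to d.\<close>
  define K2 where "K2 = (\<lambda>p. fst p - snd p *\<^sub>R e) ` (K \<times> {0..1::real})"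
  have cK2: "compact K2" unfolding K2_def using K(1)
    by (intro compact_continuous_image continuous_intros compact_Times) auto
  define q where "q n x = (w (x + (1 / real (Suc n)) *\<^sub>R e) - w x) * real (Suc n)" for n x
  have wmeas: "w \<in> borel_measurable borel" using contw by (rule borel_measurable_continuous_onI)
  have wint: "integrable lborel w" using contw K by (rule integrable_continuous_compact_support)
  have qint0: "integral\<^sup>L lborel (q n) = 0" for n
    unfolding q_def
    using integrable_lborel_translate[OF wmeas wint] integral_lborel_translate[OF wmeas wint] wint
    by simp
  have gder: "((\<lambda>s. w (x + s *\<^sub>R e)) has_real_derivative d (x + s *\<^sub>R e)) (at s)" for x s
    unfolding d_def using diff by (rule has_real_derivative_along_line)
  have lim: "(\<lambda>n. q n x) \<longlonglongrightarrow> d x" for x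
    using LIMSEQ_difference_quotient[OF gder[of x 0]] by (simp add: q_def)
  have bound: "\<bar>q n x\<bar> \<le> B * indicator K2 x" for n x
  proof (cases "x \<in> K2")
    case True
    then show ?thesis
      using difference_quotient_bounded[OF gder[of x] B(2), of "1 / real (Suc n)"]
      by (simp add: q_def)
  next
    case False
    have "x \<notin> K" using False unfolding K2_def by (force intro: image_eqI[of x _ "(x, 0)"])
    moreover have "x + (1 / real (Suc n)) *\<^sub>R e \<notin> K"
      using False unfolding K2_def
      by (force intro: image_eqI[of x _ "(x + (1 / real (Suc n)) *\<^sub>R e, 1 / real (Suc n))"])
    ultimately show ?thesis using K(2) False B(1) by (simp add: q_def)
  qed
  have dmeas: "d \<in> borel_measurable lborel"
    using borel_measurable_continuous_onI[OF dcont] by simp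
  have qmeas: "q n \<in> borel_measurable lborel" for n
    unfolding q_def using wmeas by measurable
  have "(\<lambda>n. integral\<^sup>L lborel (q n)) \<longlonglongrightarrow> integral\<^sup>L lborel d"
  proof (rule integral_dominated_convergence[where w="\<lambda>x. B * indicator K2 x"])
    show "integrable lborel (\<lambda>x. B * indicator K2 x)"
      using cK2 by (auto intro!: emeasure_compact_finite borel_compact)
  qed (use dmeas qmeas lim bound in auto)
  then show ?thesis using qint0 by (simp add: LIMSEQ_const_iff d_def[abs_def])
qed

lemma integration_by_parts_compact_support:
  fixes f g :: "'a::euclidean_space \<Rightarrow> real"
  assumes df: "\<And>x. (f has_derivative f' x) (at x)" and dg: "\<And>x. (g has_derivative g' x) (at x)"
    and cf: "continuous_on UNIV (\<lambda>x. f' x e)" and cg: "continuous_on UNIV (\<lambda>x. g' x e)"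
    and K: "compact K" "\<And>x. x \<notin> K \<Longrightarrow> f x = 0"
  shows "integral\<^sup>L lborel (\<lambda>x. f' x e * g x) = - integral\<^sup>L lborel (\<lambda>x. f x * g' x e)"
proof -
  have contf: "continuous_on UNIV f"
    using df by (meson continuous_at_imp_continuous_on has_derivative_continuous)
  have contg: "continuous_on UNIV g"
    using dg by (meson continuous_at_imp_continuous_on has_derivative_continuous)
  have f'0: "f' x e = 0" if "x \<notin> K" for x
    using has_derivative_eq_0_outside_closed[OF df compact_imp_closed[OF K(1)] that K(2)] .
  have i1: "integrable lborel (\<lambda>x. f' x e * g x)"
    using K f'0 by (intro integrable_continuous_compact_support[of _ K])
      (auto intro!: continuous_intros cf contg)
  have i2: "integrable lborel (\<lambda>x. f x * g' x e)"
    using K by (intro integrable_continuous_compact_support[of _ K])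
      (auto intro!: continuous_intros cg contf)
  have dw: "((\<lambda>x. f x * g x) has_derivative (\<lambda>h. f' x h * g x + f x * g' x h)) (at x)" for x
    using df[of x] dg[of x] by (auto intro!: derivative_eq_intros)
  have "integral\<^sup>L lborel (\<lambda>x. f' x e * g x + f x * g' x e) = 0"
    by (rule integral_derivative_compact_support_eq_0[OF dw, of e K])
      (use K in \<open>auto intro!: continuous_intros cf cg contf contg\<close>)
  then show ?thesis using i1 i2 by simp
qed

lemma integral_lebesgue_on_eq_lborel:
  fixes F :: "'a::euclidean_space \<Rightarrow> real"
  assumes "\<Omega> \<in> sets lebesgue" "F \<in> borel_measurable borel" "\<And>x. x \<notin> \<Omega> \<Longrightarrow> F x = 0"
  shows "integral\<^sup>L (lebesgue_on \<Omega>) F = integral\<^sup>L lborel F"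
    and "integrable lborel F \<Longrightarrow> integrable (lebesgue_on \<Omega>) F"
proof -
  have eq: "(\<lambda>x. indicator \<Omega> x * F x) = F" using assms(3) by (intro ext) (auto simp: indicator_def)
  have "integral\<^sup>L (lebesgue_on \<Omega>) F = integral\<^sup>L lebesgue F"
    using assms(1) by (subst integral_restrict_space) (auto simp: eq)
  also have "\<dots> = integral\<^sup>L lborel F" using assms(2) by (intro integral_completion) simp
  finally show "integral\<^sup>L (lebesgue_on \<Omega>) F = integral\<^sup>L lborel F" .
  assume "integrable lborel F"
  then have "integrable lebesgue F" using assms(2) by (subst integrable_completion) auto
  then show "integrable (lebesgue_on \<Omega>) F"
    using assms(1) by (subst integrable_restrict_space) (auto simp: eq)
qed

section \<open>Smooth functions and test functions\<close>

lemma frechet_derivative_lincomb: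
  fixes F G :: "'a::euclidean_space \<Rightarrow> real"
  assumes "F differentiable at x" "G differentiable at x"
  shows "frechet_derivative (\<lambda>x. a * F x + c * G x) (at x)
          = (\<lambda>h. a * frechet_derivative F (at x) h + c * frechet_derivative G (at x) h)"
proof -
  have "((\<lambda>x. a * F x + c * G x) has_derivative
          (\<lambda>h. a * frechet_derivative F (at x) h + c * frechet_derivative G (at x) h)) (at x)"
    using assms[THEN frechet_derivative_works[THEN iffD1]] by (auto intro!: derivative_eq_intros)
  then show ?thesis by (rule frechet_derivative_at[symmetric])
qed

lemma smooth_on_UNIV_iter_pd_differentiable:
  assumes "smooth_on UNIV \<phi>" "set vs \<subseteq> Basis"
  shows "iter_pd vs \<phi> differentiable at x"
  using assms unfolding smooth_on_def differentiable_on_def by auto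

lemma iter_pd_lincomb:
  assumes "smooth_on UNIV \<phi>" "smooth_on UNIV \<psi>" "set vs \<subseteq> Basis"
  shows "iter_pd vs (\<lambda>x. a * \<phi> x + c * \<psi> x) = (\<lambda>x. a * iter_pd vs \<phi> x + c * iter_pd vs \<psi> x)"
  using assms(3)
proof (induction vs)
  case Nil then show ?case by simp
next
  case (Cons v vs)
  show ?case
  proof (rule ext)
    fix x
    have "iter_pd vs \<phi> differentiable at x" "iter_pd vs \<psi> differentiable at x"
      using Cons.prems by (auto intro!: smooth_on_UNIV_iter_pd_differentiable assms)
    then show "iter_pd (v # vs) (\<lambda>x. a * \<phi> x + c * \<psi> x) x
        = a * iter_pd (v # vs) \<phi> x + c * iter_pd (v # vs) \<psi> x"
      using Cons by (simp add: frechet_derivative_lincomb)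
  qed
qed

lemma smooth_on_UNIV_lincomb:
  assumes "smooth_on UNIV \<phi>" "smooth_on UNIV \<psi>"
  shows "smooth_on UNIV (\<lambda>x. a * \<phi> x + c * \<psi> x)"
  unfolding smooth_on_def
proof (intro allI impI)
  fix vs :: "'a list" assume vs: "set vs \<subseteq> Basis"
  have "(\<lambda>x. a * iter_pd vs \<phi> x + c * iter_pd vs \<psi> x) differentiable_on UNIV"
    using smooth_on_UNIV_iter_pd_differentiable[OF assms(1) vs]
      smooth_on_UNIV_iter_pd_differentiable[OF assms(2) vs]
    unfolding differentiable_on_def by (auto intro!: derivative_intros)
  then show "iter_pd vs (\<lambda>x. a * \<phi> x + c * \<psi> x) differentiable_on UNIV"
    by (simp add: iter_pd_lincomb[OF assms vs])
qed

lemma grad_lincomb: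
  assumes "smooth_on UNIV \<phi>" "smooth_on UNIV \<psi>"
  shows "grad (\<lambda>x. a * \<phi> x + c * \<psi> x) x = a *\<^sub>R grad \<phi> x + c *\<^sub>R grad \<psi> x"
  using smooth_on_UNIV_iter_pd_differentiable[OF assms(1), of "[]"]
    smooth_on_UNIV_iter_pd_differentiable[OF assms(2), of "[]"]
  by (simp add: grad_def frechet_derivative_lincomb scaleR_sum_right scaleR_add_left sum.distrib)

definition supp :: "('a::euclidean_space \<Rightarrow> real) \<Rightarrow> 'a set" where
  "supp \<phi> = closure {x. \<phi> x \<noteq> 0}"

lemma test_funD:
  assumes "test_fun \<Omega> \<phi>"
  shows "compact (supp \<phi>)" "supp \<phi> \<subseteq> \<Omega>" "smooth_on UNIV \<phi>"
  using assms by (auto simp: test_fun_def supp_def)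

lemma test_fun_lincomb:
  assumes "test_fun \<Omega> \<phi>" "test_fun \<Omega> \<psi>"
  shows "test_fun \<Omega> (\<lambda>x. a * \<phi> x + c * \<psi> x)"
proof -
  let ?S = "supp (\<lambda>x. a * \<phi> x + c * \<psi> x)"
  have "?S \<subseteq> closure ({x. \<phi> x \<noteq> 0} \<union> {x. \<psi> x \<noteq> 0})"
    unfolding supp_def by (rule closure_mono) auto
  then have sub: "?S \<subseteq> supp \<phi> \<union> supp \<psi>" by (simp add: supp_def)
  have "compact (supp \<phi> \<union> supp \<psi>)" using assms by (intro compact_Un) (auto dest: test_funD)
  then have "compact ((supp \<phi> \<union> supp \<psi>) \<inter> ?S)"
    by (intro compact_Int_closed) (simp_all add: supp_def)
  then have "compact ?S" using sub by (simp add: Int_absorb1)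
  moreover have "?S \<subseteq> \<Omega>" using sub assms by (auto dest: test_funD)
  moreover have "smooth_on UNIV (\<lambda>x. a * \<phi> x + c * \<psi> x)"
    using assms by (intro smooth_on_UNIV_lincomb) (auto dest: test_funD)
  ultimately show ?thesis unfolding test_fun_def supp_def by blast
qed

lemma test_fun_iter_pd_eq_0:
  assumes "test_fun \<Omega> \<phi>" "set vs \<subseteq> Basis" "x \<notin> supp \<phi>"
  shows "iter_pd vs \<phi> x = 0"
  using assms(2,3)
proof (induction vs arbitrary: x)
  case Nil then show ?case by (auto simp: supp_def intro: closure_subset[THEN subsetD])
next
  case (Cons v vs)
  have "frechet_derivative (iter_pd vs \<phi>) (at x) = (\<lambda>_. 0)"
    using Cons by (intro frechet_derivative_eq_0_on_open[of "- supp \<phi>"]) (auto simp: supp_def)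
  then show ?case by simp
qed

lemma test_fun_iter_pd_has_derivative:
  assumes "test_fun \<Omega> \<phi>" "set vs \<subseteq> Basis"
  shows "(iter_pd vs \<phi> has_derivative frechet_derivative (iter_pd vs \<phi>) (at x)) (at x)"
  using smooth_on_UNIV_iter_pd_differentiable[OF test_funD(3)[OF assms(1)] assms(2)]
  by (simp add: frechet_derivative_works)

lemma continuous_on_test_fun_iter_pd:
  assumes "test_fun \<Omega> \<phi>" "set vs \<subseteq> Basis"
  shows "continuous_on UNIV (iter_pd vs \<phi>)"
  using smooth_on_UNIV_iter_pd_differentiable[OF test_funD(3)[OF assms(1)] assms(2)]
  by (meson continuous_at_imp_continuous_on differentiable_imp_continuous_within)

definition partial_deriv :: "'a::euclidean_space \<Rightarrow> ('a \<Rightarrow> real) \<Rightarrow> 'a \<Rightarrow> real" where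
  "partial_deriv b \<phi> x = frechet_derivative \<phi> (at x) b"

definition laplacian :: "('a::euclidean_space \<Rightarrow> real) \<Rightarrow> 'a \<Rightarrow> real" where
  "laplacian \<zeta> x = (\<Sum>b\<in>Basis. iter_pd [b, b] \<zeta> x)"

lemma grad_inner_Basis:
  assumes "b \<in> Basis"
  shows "grad \<phi> x \<bullet> b = partial_deriv b \<phi> x"
  using assms by (simp add: grad_def partial_deriv_def inner_sum_left inner_Basis if_distrib
      sum.If_cases cong: if_cong)

lemma grad_inner_grad:
  "grad \<phi> x \<bullet> grad \<zeta> x = (\<Sum>b\<in>Basis. partial_deriv b \<phi> x * partial_deriv b \<zeta> x)"
  by (subst euclidean_inner) (simp add: grad_inner_Basis)

lemma partial_deriv_square_le_norm_grad_square:
  assumes "b \<in> Basis"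
  shows "(partial_deriv b \<phi> x)\<^sup>2 \<le> (norm (grad \<phi> x))\<^sup>2"
proof -
  have "\<bar>partial_deriv b \<phi> x\<bar> \<le> norm (grad \<phi> x)"
    using Basis_le_norm[OF assms, of "grad \<phi> x"] grad_inner_Basis[OF assms] by simp
  then show ?thesis by (metis abs_ge_zero power2_abs power_mono)
qed

lemma
  assumes "test_fun \<Omega> \<phi>"
  shows continuous_on_test_fun: "continuous_on UNIV \<phi>"
    and continuous_on_test_fun_grad: "continuous_on UNIV (grad \<phi>)"
    and continuous_on_test_fun_laplacian: "continuous_on UNIV (laplacian \<phi>)"
    and continuous_on_test_fun_partial_deriv: "b \<in> Basis \<Longrightarrow> continuous_on UNIV (partial_deriv b \<phi>)"
proof -
  note cont = continuous_on_test_fun_iter_pd[OF assms]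
  show "continuous_on UNIV \<phi>" using cont[of "[]"] by simp
  show pd: "continuous_on UNIV (partial_deriv b' \<phi>)" if "b' \<in> Basis" for b'
    using cont[of "[b']"] that by (simp add: partial_deriv_def[abs_def])
  have "grad \<phi> = (\<lambda>x. \<Sum>b\<in>Basis. partial_deriv b \<phi> x *\<^sub>R b)"
    by (simp add: grad_def partial_deriv_def fun_eq_iff)
  moreover have "continuous_on UNIV (\<lambda>x. \<Sum>b\<in>Basis. partial_deriv b \<phi> x *\<^sub>R b)"
    using pd by (intro continuous_intros) auto
  ultimately show "continuous_on UNIV (grad \<phi>)" by simp
  have "continuous_on UNIV (iter_pd [b, b] \<phi>)" if "b \<in> Basis" for b
    using cont[of "[b, b]"] that by simp
  then show "continuous_on UNIV (laplacian \<phi>)"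
    unfolding laplacian_def[abs_def] by (intro continuous_on_sum) auto
qed

lemma
  assumes "test_fun \<Omega> \<phi>" "x \<notin> supp \<phi>"
  shows test_fun_eq_0: "\<phi> x = 0"
    and test_fun_grad_eq_0: "grad \<phi> x = 0"
    and test_fun_laplacian_eq_0: "laplacian \<phi> x = 0"
    and test_fun_partial_deriv_eq_0: "b \<in> Basis \<Longrightarrow> partial_deriv b \<phi> x = 0"
proof -
  note zero = test_fun_iter_pd_eq_0[OF assms(1) _ assms(2)]
  show "\<phi> x = 0" using zero[of "[]"] by simp
  show "grad \<phi> x = 0" using zero[of "[_]"] by (simp add: grad_def)
  show "laplacian \<phi> x = 0" using zero[of "[_, _]"] by (simp add: laplacian_def)
  show "b \<in> Basis \<Longrightarrow> partial_deriv b \<phi> x = 0" using zero[of "[b]"] by (simp add: partial_deriv_def)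
qed

context
  fixes \<Omega> :: "'a::euclidean_space set"
  assumes \<Omega>_open: "open \<Omega>"
begin

lemma
  fixes F :: "'a \<Rightarrow> real"
  assumes "test_fun \<Omega> \<phi>" "continuous_on UNIV F" "\<And>x. x \<notin> supp \<phi> \<Longrightarrow> F x = 0"
  shows integrable_lborel_vanishing_outside_supp: "integrable lborel F"
    and integrable_vanishing_outside_supp: "integrable (lebesgue_on \<Omega>) F"
    and integral_vanishing_outside_supp: "integral\<^sup>L (lebesgue_on \<Omega>) F = integral\<^sup>L lborel F"
proof -
  have meas: "F \<in> borel_measurable borel" using assms(2) by (rule borel_measurable_continuous_onI)
  have z: "F x = 0" if "x \<notin> \<Omega>" for x using assms(3) test_funD(2)[OF assms(1)] that by auto
  show il: "integrable lborel F"
    using assms test_funD(1)[OF assms(1)] by (intro integrable_continuous_compact_support) auto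
  show "integrable (lebesgue_on \<Omega>) F"
    using integral_lebesgue_on_eq_lborel(2)[OF _ meas z il] \<Omega>_open by simp
  show "integral\<^sup>L (lebesgue_on \<Omega>) F = integral\<^sup>L lborel F"
    using integral_lebesgue_on_eq_lborel(1)[OF _ meas z] \<Omega>_open by simp
qed

lemma integral_grad_inner_grad_test_fun:
  assumes \<phi>: "test_fun \<Omega> \<phi>" and \<zeta>: "test_fun \<Omega> \<zeta>"
  shows "integral\<^sup>L (lebesgue_on \<Omega>) (\<lambda>x. grad \<phi> x \<bullet> grad \<zeta> x)
        = - integral\<^sup>L (lebesgue_on \<Omega>) (\<lambda>x. \<phi> x * laplacian \<zeta> x)"
proof -
  let ?pp = "\<lambda>b x. partial_deriv b \<phi> x * partial_deriv b \<zeta> x"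
  let ?p2 = "\<lambda>b x. \<phi> x * iter_pd [b, b] \<zeta> x"
  have cont2: "continuous_on UNIV (iter_pd [b, b] \<zeta>)" if "b \<in> Basis" for b
    using continuous_on_test_fun_iter_pd[OF \<zeta>, of "[b, b]"] that by simp
  have pp: "integrable (lebesgue_on \<Omega>) (?pp b)"
    "integral\<^sup>L (lebesgue_on \<Omega>) (?pp b) = integral\<^sup>L lborel (?pp b)" if b: "b \<in> Basis" for b
    using continuous_on_test_fun_partial_deriv[OF \<phi> b] continuous_on_test_fun_partial_deriv[OF \<zeta> b]
      test_fun_partial_deriv_eq_0[OF \<phi> _ b]
    by (auto intro!: integrable_vanishing_outside_supp[OF \<phi>] integral_vanishing_outside_supp[OF \<phi>]
        continuous_intros)
  have p2: "integrable (lebesgue_on \<Omega>) (?p2 b)"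
    "integral\<^sup>L (lebesgue_on \<Omega>) (?p2 b) = integral\<^sup>L lborel (?p2 b)" if b: "b \<in> Basis" for b
    using continuous_on_test_fun[OF \<phi>] cont2[OF b] test_fun_eq_0[OF \<phi>]
    by (auto intro!: integrable_vanishing_outside_supp[OF \<phi>] integral_vanishing_outside_supp[OF \<phi>]
        continuous_intros)
  have parts: "integral\<^sup>L lborel (?pp b) = - integral\<^sup>L lborel (?p2 b)" if b: "b \<in> Basis" for b
  proof -
    have "integral\<^sup>L lborel (\<lambda>x. frechet_derivative \<phi> (at x) b * iter_pd [b] \<zeta> x)
       = - integral\<^sup>L lborel (\<lambda>x. \<phi> x * frechet_derivative (iter_pd [b] \<zeta>) (at x) b)"
      using b continuous_on_test_fun_partial_deriv[OF \<phi> b] continuous_on_test_fun_iter_pd[OF \<zeta>, of "[b, b]"]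
        test_funD(1)[OF \<phi>] test_fun_eq_0[OF \<phi>]
      by (intro integration_by_parts_compact_support[of _ _ _ _ b "supp \<phi>"]
          test_fun_iter_pd_has_derivative[OF \<phi>, of "[]", simplified]
          test_fun_iter_pd_has_derivative[OF \<zeta>, of "[b]"])
        (auto simp: partial_deriv_def[abs_def])
    then show ?thesis by (simp add: partial_deriv_def)
  qed
  have "integral\<^sup>L (lebesgue_on \<Omega>) (\<lambda>x. grad \<phi> x \<bullet> grad \<zeta> x)
      = (\<Sum>b\<in>Basis. integral\<^sup>L (lebesgue_on \<Omega>) (?pp b))"
    by (simp add: grad_inner_grad pp)
  also have "\<dots> = (\<Sum>b\<in>Basis. - integral\<^sup>L (lebesgue_on \<Omega>) (?p2 b))"
    by (intro sum.cong) (simp_all only: pp(2) p2(2) parts)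
  also have "\<dots> = - integral\<^sup>L (lebesgue_on \<Omega>) (\<lambda>x. \<Sum>b\<in>Basis. ?p2 b x)"
    using Bochner_Integration.integral_sum[where I=Basis and f="?p2", OF p2(1)] by (simp add: sum_negf)
  also have "\<dots> = - integral\<^sup>L (lebesgue_on \<Omega>) (\<lambda>x. \<phi> x * laplacian \<zeta> x)"
    by (simp only: laplacian_def sum_distrib_left)
  finally show ?thesis .
qed

end

section \<open>Square integrable functions\<close>

definition square_integrable :: "'x measure \<Rightarrow> ('x \<Rightarrow> 'b::euclidean_space) \<Rightarrow> bool" where
  "square_integrable M f \<longleftrightarrow> f \<in> borel_measurable M \<and> integrable M (\<lambda>x. (norm (f x))\<^sup>2)"

lemma integrable_inner_square_integrable:
  fixes f g :: "'x \<Rightarrow> 'b::euclidean_space"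
  assumes "square_integrable M f" "square_integrable M g"
  shows "integrable M (\<lambda>x. f x \<bullet> g x)"
proof (rule Bochner_Integration.integrable_bound)
  show "integrable M (\<lambda>x. (norm (f x))\<^sup>2 + (norm (g x))\<^sup>2)"
    using assms unfolding square_integrable_def by auto
  show "(\<lambda>x. f x \<bullet> g x) \<in> borel_measurable M"
    using assms unfolding square_integrable_def by (intro borel_measurable_inner) auto
  show "AE x in M. norm (f x \<bullet> g x) \<le> norm ((norm (f x))\<^sup>2 + (norm (g x))\<^sup>2)"
  proof (intro AE_I2)
    fix x
    have "\<bar>f x \<bullet> g x\<bar> \<le> norm (f x) * norm (g x)" by (rule Cauchy_Schwarz_ineq2)
    also have "\<dots> \<le> (norm (f x))\<^sup>2 + (norm (g x))\<^sup>2"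
      using sum_squares_bound[of "norm (f x)" "norm (g x)"]
        mult_nonneg_nonneg[OF norm_ge_zero norm_ge_zero, of "f x" "g x"] by linarith
    finally show "norm (f x \<bullet> g x) \<le> norm ((norm (f x))\<^sup>2 + (norm (g x))\<^sup>2)" by simp
  qed
qed

lemma norm_lincomb_square:
  fixes u v :: "'b::euclidean_space"
  shows "(norm (a *\<^sub>R u + c *\<^sub>R v))\<^sup>2 = a\<^sup>2 * (norm u)\<^sup>2 + 2 * a * c * (u \<bullet> v) + c\<^sup>2 * (norm v)\<^sup>2"
  unfolding power2_norm_eq_inner
  by (simp add: inner_commute[of v u] algebra_simps power2_eq_square)

lemma square_integrable_lincomb:
  fixes f g :: "'x \<Rightarrow> 'b::euclidean_space"
  assumes "square_integrable M f" "square_integrable M g"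
  shows "square_integrable M (\<lambda>x. a *\<^sub>R f x + c *\<^sub>R g x)"
proof -
  have "integrable M (\<lambda>x. a\<^sup>2 * (norm (f x))\<^sup>2 + 2 * a * c * (f x \<bullet> g x) + c\<^sup>2 * (norm (g x))\<^sup>2)"
    using assms integrable_inner_square_integrable[OF assms] unfolding square_integrable_def by auto
  moreover have "(\<lambda>x. a *\<^sub>R f x + c *\<^sub>R g x) \<in> borel_measurable M"
    using assms unfolding square_integrable_def by (intro borel_measurable_add borel_measurable_scaleR) auto
  ultimately show ?thesis unfolding square_integrable_def by (simp only: norm_lincomb_square)
qed

lemma square_integrable_diff:
  fixes f g :: "'x \<Rightarrow> 'b::euclidean_space"
  assumes "square_integrable M f" "square_integrable M g"
  shows "square_integrable M (\<lambda>x. f x - g x)"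
  using square_integrable_lincomb[OF assms, of 1 "-1"] by simp

lemma integral_norm_lincomb_square:
  fixes f g :: "'x \<Rightarrow> 'b::euclidean_space"
  assumes "square_integrable M f" "square_integrable M g"
  shows "integral\<^sup>L M (\<lambda>x. (norm (a *\<^sub>R f x + c *\<^sub>R g x))\<^sup>2)
    = a\<^sup>2 * integral\<^sup>L M (\<lambda>x. (norm (f x))\<^sup>2) + 2 * a * c * integral\<^sup>L M (\<lambda>x. f x \<bullet> g x)
      + c\<^sup>2 * integral\<^sup>L M (\<lambda>x. (norm (g x))\<^sup>2)"
  using assms integrable_inner_square_integrable[OF assms] unfolding square_integrable_def
  by (simp add: norm_lincomb_square)

lemma discriminant_nonneg_quadratic:
  fixes A B C :: real
  assumes "\<And>t. 0 \<le> A - 2 * t * B + t\<^sup>2 * C" "C \<ge> 0"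
  shows "B\<^sup>2 \<le> A * C"
proof (cases "C = 0")
  case True
  have "B = 0"
  proof (rule ccontr)
    assume "B \<noteq> 0"
    have "0 \<le> A - 2 * ((A + 1) / (2 * B)) * B" using assms(1)[of "(A + 1) / (2 * B)"] True by simp
    also have "\<dots> = -1" using \<open>B \<noteq> 0\<close> by (simp add: field_simps)
    finally show False by simp
  qed
  then show ?thesis using True by simp
next
  case False
  then have C: "C > 0" using assms(2) by simp
  have "0 \<le> A - 2 * (B / C) * B + (B / C)\<^sup>2 * C" by (rule assms(1))
  also have "\<dots> = (A * C - B\<^sup>2) / C" using C by (simp add: field_simps power2_eq_square)
  finally show ?thesis using C by (simp add: zero_le_divide_iff)
qed

lemma Cauchy_Schwarz_integral:
  fixes f g :: "'x \<Rightarrow> 'b::euclidean_space"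
  assumes "square_integrable M f" "square_integrable M g"
  shows "\<bar>integral\<^sup>L M (\<lambda>x. f x \<bullet> g x)\<bar>
    \<le> sqrt (integral\<^sup>L M (\<lambda>x. (norm (f x))\<^sup>2)) * sqrt (integral\<^sup>L M (\<lambda>x. (norm (g x))\<^sup>2))"
proof -
  let ?A = "integral\<^sup>L M (\<lambda>x. (norm (f x))\<^sup>2)" and ?C = "integral\<^sup>L M (\<lambda>x. (norm (g x))\<^sup>2)"
  let ?B = "integral\<^sup>L M (\<lambda>x. f x \<bullet> g x)"
  have "?B\<^sup>2 \<le> ?A * ?C"
  proof (rule discriminant_nonneg_quadratic)
    fix t :: real
    have "0 \<le> integral\<^sup>L M (\<lambda>x. (norm (1 *\<^sub>R f x + (-t) *\<^sub>R g x))\<^sup>2)"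
      by (rule integral_nonneg_AE) auto
    also have "\<dots> = ?A - 2 * t * ?B + t\<^sup>2 * ?C"
      using integral_norm_lincomb_square[OF assms, of 1 "-t"] by simp
    finally show "0 \<le> ?A - 2 * t * ?B + t\<^sup>2 * ?C" .
  qed (rule integral_nonneg_AE, auto)
  then have "sqrt (?B\<^sup>2) \<le> sqrt (?A * ?C)" by (rule real_sqrt_le_mono)
  then show ?thesis by (simp add: real_sqrt_mult)
qed

lemma tendsto_integral_inner_0:
  fixes d :: "nat \<Rightarrow> 'x \<Rightarrow> 'b::euclidean_space"
  assumes "\<And>n. square_integrable M (d n)" "square_integrable M g"
    and "(\<lambda>n. integral\<^sup>L M (\<lambda>x. (norm (d n x))\<^sup>2)) \<longlonglongrightarrow> 0"
  shows "(\<lambda>n. integral\<^sup>L M (\<lambda>x. d n x \<bullet> g x)) \<longlonglongrightarrow> 0"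
proof (rule Lim_null_comparison)
  show "\<forall>\<^sub>F n in sequentially. norm (integral\<^sup>L M (\<lambda>x. d n x \<bullet> g x)) \<le>
     sqrt (integral\<^sup>L M (\<lambda>x. (norm (d n x))\<^sup>2)) * sqrt (integral\<^sup>L M (\<lambda>x. (norm (g x))\<^sup>2))"
    using Cauchy_Schwarz_integral[OF assms(1) assms(2)] by simp
  show "(\<lambda>n. sqrt (integral\<^sup>L M (\<lambda>x. (norm (d n x))\<^sup>2)) * sqrt (integral\<^sup>L M (\<lambda>x. (norm (g x))\<^sup>2)))
      \<longlonglongrightarrow> 0"
    using tendsto_real_sqrt[OF assms(3)] by (auto intro: tendsto_mult_left_zero)
qed

lemma tendsto_integral_inner:
  fixes f :: "nat \<Rightarrow> 'x \<Rightarrow> 'b::euclidean_space"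
  assumes "\<And>n. square_integrable M (f n)" "square_integrable M F" "square_integrable M g"
    and "(\<lambda>n. integral\<^sup>L M (\<lambda>x. (norm (f n x - F x))\<^sup>2)) \<longlonglongrightarrow> 0"
  shows "(\<lambda>n. integral\<^sup>L M (\<lambda>x. f n x \<bullet> g x)) \<longlonglongrightarrow> integral\<^sup>L M (\<lambda>x. F x \<bullet> g x)"
proof -
  have "(\<lambda>n. integral\<^sup>L M (\<lambda>x. (f n x - F x) \<bullet> g x) + integral\<^sup>L M (\<lambda>x. F x \<bullet> g x))
     \<longlonglongrightarrow> 0 + integral\<^sup>L M (\<lambda>x. F x \<bullet> g x)"
    using square_integrable_diff[OF assms(1,2)] assms(3,4)
    by (intro tendsto_add tendsto_integral_inner_0) auto
  moreover have "integral\<^sup>L M (\<lambda>x. (f n x - F x) \<bullet> g x) + integral\<^sup>L M (\<lambda>x. F x \<bullet> g x)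
      = integral\<^sup>L M (\<lambda>x. f n x \<bullet> g x)" for n
    using integrable_inner_square_integrable[OF assms(1) assms(3)]
      integrable_inner_square_integrable[OF assms(2,3)] by (simp add: inner_diff_left)
  ultimately show ?thesis by simp
qed

lemma tendsto_integral_norm_square:
  fixes f :: "nat \<Rightarrow> 'x \<Rightarrow> 'b::euclidean_space"
  assumes "\<And>n. square_integrable M (f n)" "square_integrable M F"
    and "(\<lambda>n. integral\<^sup>L M (\<lambda>x. (norm (f n x - F x))\<^sup>2)) \<longlonglongrightarrow> 0"
  shows "(\<lambda>n. integral\<^sup>L M (\<lambda>x. (norm (f n x))\<^sup>2)) \<longlonglongrightarrow> integral\<^sup>L M (\<lambda>x. (norm (F x))\<^sup>2)"
proof -
  have D: "square_integrable M (\<lambda>x. f n x - F x)" for n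
    using square_integrable_diff[OF assms(1) assms(2)] .
  have "(\<lambda>n. integral\<^sup>L M (\<lambda>x. (norm (f n x - F x))\<^sup>2) + 2 * integral\<^sup>L M (\<lambda>x. (f n x - F x) \<bullet> F x)
     + integral\<^sup>L M (\<lambda>x. (norm (F x))\<^sup>2)) \<longlonglongrightarrow> 0 + 2 * 0 + integral\<^sup>L M (\<lambda>x. (norm (F x))\<^sup>2)"
    using tendsto_integral_inner_0[of M "\<lambda>n x. f n x - F x", OF D assms(2,3)] assms(3)
    by (intro tendsto_intros) auto
  then show ?thesis
    using integral_norm_lincomb_square[OF D assms(2), where a=1 and c=1] by simp
qed

lemma tendsto_integral_norm_lincomb_square_0:
  fixes X Y :: "nat \<Rightarrow> 'x \<Rightarrow> 'b::euclidean_space"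
  assumes "\<And>n. square_integrable M (X n)" "\<And>n. square_integrable M (Y n)"
    and "(\<lambda>n. integral\<^sup>L M (\<lambda>x. (norm (X n x))\<^sup>2)) \<longlonglongrightarrow> 0"
    and "(\<lambda>n. integral\<^sup>L M (\<lambda>x. (norm (Y n x))\<^sup>2)) \<longlonglongrightarrow> 0"
  shows "(\<lambda>n. integral\<^sup>L M (\<lambda>x. (norm (a *\<^sub>R X n x + c *\<^sub>R Y n x))\<^sup>2)) \<longlonglongrightarrow> 0"
proof -
  have xy: "(\<lambda>n. integral\<^sup>L M (\<lambda>x. X n x \<bullet> Y n x)) \<longlonglongrightarrow> 0"
  proof (rule Lim_null_comparison)
    show "\<forall>\<^sub>F n in sequentially. norm (integral\<^sup>L M (\<lambda>x. X n x \<bullet> Y n x)) \<le>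
       sqrt (integral\<^sup>L M (\<lambda>x. (norm (X n x))\<^sup>2)) * sqrt (integral\<^sup>L M (\<lambda>x. (norm (Y n x))\<^sup>2))"
      using Cauchy_Schwarz_integral[OF assms(1) assms(2)] by simp
    show "(\<lambda>n. sqrt (integral\<^sup>L M (\<lambda>x. (norm (X n x))\<^sup>2)) * sqrt (integral\<^sup>L M (\<lambda>x. (norm (Y n x))\<^sup>2)))
        \<longlonglongrightarrow> 0"
      using tendsto_mult[OF tendsto_real_sqrt[OF assms(3)] tendsto_real_sqrt[OF assms(4)]] by simp
  qed
  have "(\<lambda>n. a\<^sup>2 * integral\<^sup>L M (\<lambda>x. (norm (X n x))\<^sup>2) + 2 * a * c * integral\<^sup>L M (\<lambda>x. X n x \<bullet> Y n x)
      + c\<^sup>2 * integral\<^sup>L M (\<lambda>x. (norm (Y n x))\<^sup>2)) \<longlonglongrightarrow> a\<^sup>2 * 0 + 2 * a * c * 0 + c\<^sup>2 * 0"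
    using assms(3,4) xy by (intro tendsto_intros)
  then show ?thesis by (simp add: integral_norm_lincomb_square[OF assms(1) assms(2)])
qed

section \<open>The Sobolev space H_0^1\<close>

context
  fixes \<Omega> :: "'a::euclidean_space set"
  assumes \<Omega>_open: "open \<Omega>"
begin

lemma
  assumes "test_fun \<Omega> \<phi>"
  shows square_integrable_test_fun: "square_integrable (lebesgue_on \<Omega>) \<phi>"
    and square_integrable_test_fun_grad: "square_integrable (lebesgue_on \<Omega>) (grad \<phi>)"
    and square_integrable_test_fun_laplacian: "square_integrable (lebesgue_on \<Omega>) (laplacian \<phi>)"
proof -
  have meas: "F \<in> borel_measurable (lebesgue_on \<Omega>)" if "continuous_on UNIV F"
    for F :: "'a \<Rightarrow> 'b::euclidean_space"
    using that \<Omega>_open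
    by (intro continuous_imp_measurable_on_sets_lebesgue) (auto intro: continuous_on_subset)
  note intro = meas integrable_vanishing_outside_supp[OF \<Omega>_open assms] continuous_intros
  show "square_integrable (lebesgue_on \<Omega>) \<phi>"
    using continuous_on_test_fun[OF assms] test_fun_eq_0[OF assms]
    unfolding square_integrable_def by (auto intro!: intro)
  show "square_integrable (lebesgue_on \<Omega>) (grad \<phi>)"
    using continuous_on_test_fun_grad[OF assms] test_fun_grad_eq_0[OF assms]
    unfolding square_integrable_def by (auto intro!: intro)
  show "square_integrable (lebesgue_on \<Omega>) (laplacian \<phi>)"
    using continuous_on_test_fun_laplacian[OF assms] test_fun_laplacian_eq_0[OF assms]
    unfolding square_integrable_def by (auto intro!: intro)
qed

lemma H01_pairE:
  assumes "H01_pair \<Omega> u g"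
  obtains \<phi> where "\<And>n. test_fun \<Omega> (\<phi> n)"
    and "square_integrable (lebesgue_on \<Omega>) u" "square_integrable (lebesgue_on \<Omega>) g"
    and "(\<lambda>n. integral\<^sup>L (lebesgue_on \<Omega>) (\<lambda>x. (norm (\<phi> n x - u x))\<^sup>2)) \<longlonglongrightarrow> 0"
    and "(\<lambda>n. integral\<^sup>L (lebesgue_on \<Omega>) (\<lambda>x. (norm (grad (\<phi> n) x - g x))\<^sup>2)) \<longlonglongrightarrow> 0"
proof -
  obtain \<phi> where \<phi>: "\<And>n. test_fun \<Omega> (\<phi> n)"
    "u \<in> borel_measurable (lebesgue_on \<Omega>)" "g \<in> borel_measurable (lebesgue_on \<Omega>)"
    "\<And>n. integrable (lebesgue_on \<Omega>) (\<lambda>x. (norm (\<phi> n x - u x))\<^sup>2)"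
    "\<And>n. integrable (lebesgue_on \<Omega>) (\<lambda>x. (norm (grad (\<phi> n) x - g x))\<^sup>2)"
    "(\<lambda>n. integral\<^sup>L (lebesgue_on \<Omega>) (\<lambda>x. (norm (\<phi> n x - u x))\<^sup>2)) \<longlonglongrightarrow> 0"
    "(\<lambda>n. integral\<^sup>L (lebesgue_on \<Omega>) (\<lambda>x. (norm (grad (\<phi> n) x - g x))\<^sup>2)) \<longlonglongrightarrow> 0"
    using assms unfolding H01_pair_def real_norm_def power2_abs by blast
  have d: "square_integrable (lebesgue_on \<Omega>) (\<lambda>x. \<phi> 0 x - u x)"
    and dg: "square_integrable (lebesgue_on \<Omega>) (\<lambda>x. grad (\<phi> 0) x - g x)"
    using \<phi>(2-5) square_integrable_test_fun[OF \<phi>(1)] square_integrable_test_fun_grad[OF \<phi>(1)]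
    unfolding square_integrable_def by (auto intro!: borel_measurable_diff)
  have "square_integrable (lebesgue_on \<Omega>) u" "square_integrable (lebesgue_on \<Omega>) g"
    using square_integrable_diff[OF square_integrable_test_fun[OF \<phi>(1)[of 0]] d]
      square_integrable_diff[OF square_integrable_test_fun_grad[OF \<phi>(1)[of 0]] dg] by simp_all
  then show thesis by (rule that[OF \<phi>(1)]) (use \<phi>(6,7) in simp_all)
qed

lemma H01_pair_square_integrable:
  assumes "H01_pair \<Omega> u g"
  shows "square_integrable (lebesgue_on \<Omega>) u" "square_integrable (lebesgue_on \<Omega>) g"
  using H01_pairE[OF assms] by blast+

lemma H01_pair_weak_grad:
  assumes "H01_pair \<Omega> u g" "test_fun \<Omega> \<zeta>"
  shows "integral\<^sup>L (lebesgue_on \<Omega>) (\<lambda>x. g x \<bullet> grad \<zeta> x)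
       = - integral\<^sup>L (lebesgue_on \<Omega>) (\<lambda>x. u x * laplacian \<zeta> x)"
proof -
  obtain \<phi> where \<phi>: "\<And>n. test_fun \<Omega> (\<phi> n)"
    "square_integrable (lebesgue_on \<Omega>) u" "square_integrable (lebesgue_on \<Omega>) g"
    "(\<lambda>n. integral\<^sup>L (lebesgue_on \<Omega>) (\<lambda>x. (norm (\<phi> n x - u x))\<^sup>2)) \<longlonglongrightarrow> 0"
    "(\<lambda>n. integral\<^sup>L (lebesgue_on \<Omega>) (\<lambda>x. (norm (grad (\<phi> n) x - g x))\<^sup>2)) \<longlonglongrightarrow> 0"
    using H01_pairE[OF assms(1)] by blast
  have "(\<lambda>n. integral\<^sup>L (lebesgue_on \<Omega>) (\<lambda>x. grad (\<phi> n) x \<bullet> grad \<zeta> x))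
      \<longlonglongrightarrow> integral\<^sup>L (lebesgue_on \<Omega>) (\<lambda>x. g x \<bullet> grad \<zeta> x)"
    using square_integrable_test_fun_grad \<phi> assms(2) by (intro tendsto_integral_inner) auto
  moreover have "(\<lambda>n. integral\<^sup>L (lebesgue_on \<Omega>) (\<lambda>x. \<phi> n x \<bullet> laplacian \<zeta> x))
      \<longlonglongrightarrow> integral\<^sup>L (lebesgue_on \<Omega>) (\<lambda>x. u x \<bullet> laplacian \<zeta> x)"
    using square_integrable_test_fun square_integrable_test_fun_laplacian \<phi> assms(2)
    by (intro tendsto_integral_inner) auto
  then have "(\<lambda>n. integral\<^sup>L (lebesgue_on \<Omega>) (\<lambda>x. grad (\<phi> n) x \<bullet> grad \<zeta> x))
      \<longlonglongrightarrow> - integral\<^sup>L (lebesgue_on \<Omega>) (\<lambda>x. u x * laplacian \<zeta> x)"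
    using integral_grad_inner_grad_test_fun[OF \<Omega>_open \<phi>(1) assms(2)] by (simp add: tendsto_minus_cancel_left)
  ultimately show ?thesis by (rule LIMSEQ_unique)
qed

text \<open>The difference k of two weak gradients of u is orthogonal to the gradients of all test
  functions, hence to their limits g and h, hence to k itself.\<close>
lemma H01_pair_unique:
  assumes g: "H01_pair \<Omega> u g" and h: "H01_pair \<Omega> u h"
  shows "AE x in lebesgue_on \<Omega>. g x = h x"
proof -
  have Lg: "square_integrable (lebesgue_on \<Omega>) g" and Lh: "square_integrable (lebesgue_on \<Omega>) h"
    using H01_pair_square_integrable g h by blast+
  define k where "k x = g x - h x" for x
  have Lk: "square_integrable (lebesgue_on \<Omega>) k" unfolding k_def using square_integrable_diff[OF Lg Lh] .
  have orth: "integral\<^sup>L (lebesgue_on \<Omega>) (\<lambda>x. k x \<bullet> grad \<zeta> x) = 0" if \<zeta>: "test_fun \<Omega> \<zeta>" for \<zeta>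
    using integrable_inner_square_integrable[OF Lg square_integrable_test_fun_grad[OF \<zeta>]]
      integrable_inner_square_integrable[OF Lh square_integrable_test_fun_grad[OF \<zeta>]]
      H01_pair_weak_grad[OF g \<zeta>] H01_pair_weak_grad[OF h \<zeta>]
    by (simp add: k_def inner_diff_left)
  have zero: "integral\<^sup>L (lebesgue_on \<Omega>) (\<lambda>x. G x \<bullet> k x) = 0" if G: "H01_pair \<Omega> u G" for G
  proof -
    obtain \<phi> where \<phi>: "\<And>n. test_fun \<Omega> (\<phi> n)" "square_integrable (lebesgue_on \<Omega>) G"
      "(\<lambda>n. integral\<^sup>L (lebesgue_on \<Omega>) (\<lambda>x. (norm (grad (\<phi> n) x - G x))\<^sup>2)) \<longlonglongrightarrow> 0"
      using H01_pairE[OF G] by blast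
    have "(\<lambda>n. integral\<^sup>L (lebesgue_on \<Omega>) (\<lambda>x. grad (\<phi> n) x \<bullet> k x))
        \<longlonglongrightarrow> integral\<^sup>L (lebesgue_on \<Omega>) (\<lambda>x. G x \<bullet> k x)"
      using square_integrable_test_fun_grad \<phi> Lk by (intro tendsto_integral_inner) auto
    moreover have "integral\<^sup>L (lebesgue_on \<Omega>) (\<lambda>x. grad (\<phi> n) x \<bullet> k x) = 0" for n
      using orth[OF \<phi>(1)] by (simp add: inner_commute)
    ultimately show ?thesis by (simp add: LIMSEQ_const_iff)
  qed
  have "integral\<^sup>L (lebesgue_on \<Omega>) (\<lambda>x. (norm (k x))\<^sup>2)
      = integral\<^sup>L (lebesgue_on \<Omega>) (\<lambda>x. g x \<bullet> k x) - integral\<^sup>L (lebesgue_on \<Omega>) (\<lambda>x. h x \<bullet> k x)"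
    using integrable_inner_square_integrable[OF Lg Lk] integrable_inner_square_integrable[OF Lh Lk]
    by (simp add: power2_norm_eq_inner k_def inner_diff_left)
  also have "\<dots> = 0" using zero[OF g] zero[OF h] by simp
  finally have "AE x in lebesgue_on \<Omega>. (norm (k x))\<^sup>2 = 0"
    using Lk unfolding square_integrable_def by (subst (asm) integral_nonneg_eq_0_iff_AE) auto
  then show ?thesis by eventually_elim (simp add: k_def)
qed

lemma H01_pair_wgrad:
  assumes "H01_pair \<Omega> u g"
  shows "H01_pair \<Omega> u (wgrad \<Omega> u)"
    and "hnorm2 \<Omega> u = integral\<^sup>L (lebesgue_on \<Omega>) (\<lambda>x. (norm (g x))\<^sup>2)"
proof -
  show w: "H01_pair \<Omega> u (wgrad \<Omega> u)"
    unfolding wgrad_def by (rule someI[of "H01_pair \<Omega> u" g, OF assms])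
  show "hnorm2 \<Omega> u = integral\<^sup>L (lebesgue_on \<Omega>) (\<lambda>x. (norm (g x))\<^sup>2)"
    unfolding hnorm2_def using H01_pair_unique[OF w assms]
    by (intro integral_cong_AE) (use H01_pair_square_integrable[OF w] H01_pair_square_integrable[OF assms] in
        \<open>auto simp: square_integrable_def\<close>)
qed

lemma H01_pair_lincomb:
  assumes "H01_pair \<Omega> u g" and "H01_pair \<Omega> v h"
  shows "H01_pair \<Omega> (\<lambda>x. a * u x + c * v x) (\<lambda>x. a *\<^sub>R g x + c *\<^sub>R h x)"
proof -
  obtain \<phi> where \<phi>: "\<And>n. test_fun \<Omega> (\<phi> n)"
    "square_integrable (lebesgue_on \<Omega>) u" "square_integrable (lebesgue_on \<Omega>) g"
    "(\<lambda>n. integral\<^sup>L (lebesgue_on \<Omega>) (\<lambda>x. (norm (\<phi> n x - u x))\<^sup>2)) \<longlonglongrightarrow> 0"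
    "(\<lambda>n. integral\<^sup>L (lebesgue_on \<Omega>) (\<lambda>x. (norm (grad (\<phi> n) x - g x))\<^sup>2)) \<longlonglongrightarrow> 0"
    using H01_pairE[OF assms(1)] by blast
  obtain \<psi> where \<psi>: "\<And>n. test_fun \<Omega> (\<psi> n)"
    "square_integrable (lebesgue_on \<Omega>) v" "square_integrable (lebesgue_on \<Omega>) h"
    "(\<lambda>n. integral\<^sup>L (lebesgue_on \<Omega>) (\<lambda>x. (norm (\<psi> n x - v x))\<^sup>2)) \<longlonglongrightarrow> 0"
    "(\<lambda>n. integral\<^sup>L (lebesgue_on \<Omega>) (\<lambda>x. (norm (grad (\<psi> n) x - h x))\<^sup>2)) \<longlonglongrightarrow> 0"
    using H01_pairE[OF assms(2)] by blast
  define \<Phi> where "\<Phi> n x = a * \<phi> n x + c * \<psi> n x" for n x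
  have test: "test_fun \<Omega> (\<Phi> n)" for n
    unfolding \<Phi>_def[abs_def] using \<phi>(1) \<psi>(1) by (rule test_fun_lincomb)
  have "grad (\<Phi> n) x = a *\<^sub>R grad (\<phi> n) x + c *\<^sub>R grad (\<psi> n) x" for n x
    unfolding \<Phi>_def[abs_def] using test_funD(3)[OF \<phi>(1)] test_funD(3)[OF \<psi>(1)] by (rule grad_lincomb)
  then have diff_eqs: "\<Phi> n x - (a * u x + c * v x) = a *\<^sub>R (\<phi> n x - u x) + c *\<^sub>R (\<psi> n x - v x)"
    "grad (\<Phi> n) x - (a *\<^sub>R g x + c *\<^sub>R h x)
       = a *\<^sub>R (grad (\<phi> n) x - g x) + c *\<^sub>R (grad (\<psi> n) x - h x)" for n x
    by (simp_all add: \<Phi>_def algebra_simps)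
  have LX: "square_integrable (lebesgue_on \<Omega>) (\<lambda>x. \<phi> n x - u x)"
    and LY: "square_integrable (lebesgue_on \<Omega>) (\<lambda>x. \<psi> n x - v x)"
    and LG: "square_integrable (lebesgue_on \<Omega>) (\<lambda>x. grad (\<phi> n) x - g x)"
    and LH: "square_integrable (lebesgue_on \<Omega>) (\<lambda>x. grad (\<psi> n) x - h x)" for n
    using \<phi> \<psi> square_integrable_test_fun square_integrable_test_fun_grad
    by (auto intro!: square_integrable_diff)
  have "square_integrable (lebesgue_on \<Omega>) (\<lambda>x. a * u x + c * v x)"
    "square_integrable (lebesgue_on \<Omega>) (\<lambda>x. a *\<^sub>R g x + c *\<^sub>R h x)"
    using square_integrable_lincomb[OF \<phi>(2) \<psi>(2)] square_integrable_lincomb[OF \<phi>(3) \<psi>(3)] by auto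
  moreover have "square_integrable (lebesgue_on \<Omega>) (\<lambda>x. \<Phi> n x - (a * u x + c * v x))"
    "square_integrable (lebesgue_on \<Omega>) (\<lambda>x. grad (\<Phi> n) x - (a *\<^sub>R g x + c *\<^sub>R h x))" for n
    unfolding diff_eqs using square_integrable_lincomb LX LY LG LH by blast+
  moreover have "(\<lambda>n. integral\<^sup>L (lebesgue_on \<Omega>) (\<lambda>x. (\<Phi> n x - (a * u x + c * v x))\<^sup>2)) \<longlonglongrightarrow> 0"
    using tendsto_integral_norm_lincomb_square_0[OF LX LY \<phi>(4) \<psi>(4), of a c]
    by (simp add: diff_eqs(1))
  moreover have "(\<lambda>n. integral\<^sup>L (lebesgue_on \<Omega>)
      (\<lambda>x. (norm (grad (\<Phi> n) x - (a *\<^sub>R g x + c *\<^sub>R h x)))\<^sup>2)) \<longlonglongrightarrow> 0"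
    using tendsto_integral_norm_lincomb_square_0[OF LG LH \<phi>(5) \<psi>(5), of a c]
    by (simp only: diff_eqs(2))
  ultimately show ?thesis
    unfolding H01_pair_def square_integrable_def using test by auto
qed

text \<open>Integrating the derivative of x \<bullet> b times \<phi>^2 in direction b gives the identity below;
  together with 2 |a c| \<le> a^2/2 + 2 c^2 it yields the Poincare inequality.\<close>
lemma integral_square_test_fun_by_parts:
  assumes \<phi>: "test_fun \<Omega> \<phi>" and b: "b \<in> Basis"
  shows "integral\<^sup>L (lebesgue_on \<Omega>) (\<lambda>x. (\<phi> x)\<^sup>2)
       = -2 * integral\<^sup>L (lebesgue_on \<Omega>) (\<lambda>x. (x \<bullet> b) * \<phi> x * partial_deriv b \<phi> x)"
proof -
  let ?A = "\<lambda>x. (\<phi> x)\<^sup>2" and ?B = "\<lambda>x. (x \<bullet> b) * \<phi> x * partial_deriv b \<phi> x"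
  note pd = continuous_on_test_fun_partial_deriv[OF \<phi> b]
  note cont = continuous_on_test_fun[OF \<phi>]
  have "((\<lambda>x. (x \<bullet> b) * \<phi> x) has_derivative
      (\<lambda>h. (x \<bullet> b) * frechet_derivative \<phi> (at x) h + (h \<bullet> b) * \<phi> x)) (at x)" for x
    using test_fun_iter_pd_has_derivative[OF \<phi>, of "[]"]
    by (auto intro!: derivative_eq_intros)
  then have "integral\<^sup>L lborel (\<lambda>x. ((x \<bullet> b) * frechet_derivative \<phi> (at x) b + (b \<bullet> b) * \<phi> x) * \<phi> x)
      = - integral\<^sup>L lborel (\<lambda>x. ((x \<bullet> b) * \<phi> x) * frechet_derivative \<phi> (at x) b)"
    using test_fun_iter_pd_has_derivative[OF \<phi>, of "[]"] pd cont test_funD(1)[OF \<phi>]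
      test_fun_eq_0[OF \<phi>]
    by (intro integration_by_parts_compact_support[of _ _ _ _ b "supp \<phi>"])
      (auto simp: partial_deriv_def[abs_def] intro!: continuous_intros)
  then have "integral\<^sup>L lborel (\<lambda>x. ?B x + ?A x) = - integral\<^sup>L lborel ?B"
    using b by (simp add: partial_deriv_def power2_eq_square algebra_simps)
  moreover have "integrable lborel ?A" "integrable lborel ?B"
    "integral\<^sup>L (lebesgue_on \<Omega>) ?A = integral\<^sup>L lborel ?A"
    "integral\<^sup>L (lebesgue_on \<Omega>) ?B = integral\<^sup>L lborel ?B"
    using pd cont test_fun_eq_0[OF \<phi>]
    by (auto intro!: integrable_lborel_vanishing_outside_supp[OF \<Omega>_open \<phi>]
        integral_vanishing_outside_supp[OF \<Omega>_open \<phi>] continuous_intros)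
  ultimately show ?thesis by simp
qed

lemma poincare_test_fun:
  assumes R: "\<And>x. x \<in> \<Omega> \<Longrightarrow> norm x \<le> R" and \<phi>: "test_fun \<Omega> \<phi>"
  shows "integral\<^sup>L (lebesgue_on \<Omega>) (\<lambda>x. (\<phi> x)\<^sup>2)
       \<le> 4 * R\<^sup>2 * integral\<^sup>L (lebesgue_on \<Omega>) (\<lambda>x. (norm (grad \<phi> x))\<^sup>2)"
proof -
  obtain b :: 'a where b: "b \<in> Basis" using nonempty_Basis by blast
  define A where "A x = (\<phi> x)\<^sup>2" for x
  define B where "B x = (x \<bullet> b) * \<phi> x * partial_deriv b \<phi> x" for x
  define P where "P x = (norm (grad \<phi> x))\<^sup>2" for x
  have pointwise: "-2 * B x \<le> A x / 2 + 2 * R\<^sup>2 * P x" if x: "x \<in> \<Omega>" for x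
  proof -
    have "0 \<le> (\<phi> x + 2 * (x \<bullet> b) * partial_deriv b \<phi> x)\<^sup>2" by simp
    then have "-2 * B x \<le> A x / 2 + 2 * ((x \<bullet> b)\<^sup>2 * (partial_deriv b \<phi> x)\<^sup>2)"
      unfolding A_def B_def by (simp add: power2_eq_square algebra_simps)
    moreover have "\<bar>x \<bullet> b\<bar> \<le> R" using Basis_le_norm[OF b, of x] R[OF x] by simp
    then have "(x \<bullet> b)\<^sup>2 \<le> R\<^sup>2" by (metis abs_ge_zero power2_abs power_mono)
    then have "(x \<bullet> b)\<^sup>2 * (partial_deriv b \<phi> x)\<^sup>2 \<le> R\<^sup>2 * P x"
      using partial_deriv_square_le_norm_grad_square[OF b, of \<phi> x] unfolding P_def
      by (intro mult_mono) auto
    ultimately show ?thesis by linarith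
  qed
  have "integrable (lebesgue_on \<Omega>) A" "integrable (lebesgue_on \<Omega>) B"
    "integrable (lebesgue_on \<Omega>) P"
    using continuous_on_test_fun[OF \<phi>] continuous_on_test_fun_partial_deriv[OF \<phi> b]
      continuous_on_test_fun_grad[OF \<phi>] test_fun_eq_0[OF \<phi>] test_fun_grad_eq_0[OF \<phi>]
    unfolding A_def[abs_def] B_def[abs_def] P_def[abs_def]
    by (auto intro!: integrable_vanishing_outside_supp[OF \<Omega>_open \<phi>] continuous_intros)
  then have "integral\<^sup>L (lebesgue_on \<Omega>) (\<lambda>x. -2 * B x)
      \<le> integral\<^sup>L (lebesgue_on \<Omega>) (\<lambda>x. A x / 2 + 2 * R\<^sup>2 * P x)"
    using pointwise by (intro integral_mono) auto
  then have "integral\<^sup>L (lebesgue_on \<Omega>) A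
      \<le> integral\<^sup>L (lebesgue_on \<Omega>) A / 2 + 2 * R\<^sup>2 * integral\<^sup>L (lebesgue_on \<Omega>) P"
    using \<open>integrable _ A\<close> \<open>integrable _ B\<close> \<open>integrable _ P\<close>
      integral_square_test_fun_by_parts[OF \<phi> b]
    by (simp add: A_def[abs_def] B_def[abs_def])
  then show ?thesis by (simp add: A_def[abs_def] P_def[abs_def])
qed

lemma poincare_H01_pair:
  assumes R: "\<And>x. x \<in> \<Omega> \<Longrightarrow> norm x \<le> R" and ug: "H01_pair \<Omega> u g"
  shows "integral\<^sup>L (lebesgue_on \<Omega>) (\<lambda>x. (u x)\<^sup>2)
       \<le> 4 * R\<^sup>2 * integral\<^sup>L (lebesgue_on \<Omega>) (\<lambda>x. (norm (g x))\<^sup>2)"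
proof -
  obtain \<phi> where \<phi>: "\<And>n. test_fun \<Omega> (\<phi> n)"
    "square_integrable (lebesgue_on \<Omega>) u" "square_integrable (lebesgue_on \<Omega>) g"
    "(\<lambda>n. integral\<^sup>L (lebesgue_on \<Omega>) (\<lambda>x. (norm (\<phi> n x - u x))\<^sup>2)) \<longlonglongrightarrow> 0"
    "(\<lambda>n. integral\<^sup>L (lebesgue_on \<Omega>) (\<lambda>x. (norm (grad (\<phi> n) x - g x))\<^sup>2)) \<longlonglongrightarrow> 0"
    using H01_pairE[OF ug] by blast
  have "(\<lambda>n. integral\<^sup>L (lebesgue_on \<Omega>) (\<lambda>x. (norm (\<phi> n x))\<^sup>2))
      \<longlonglongrightarrow> integral\<^sup>L (lebesgue_on \<Omega>) (\<lambda>x. (norm (u x))\<^sup>2)"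
    using square_integrable_test_fun \<phi> by (intro tendsto_integral_norm_square) auto
  moreover have "(\<lambda>n. 4 * R\<^sup>2 * integral\<^sup>L (lebesgue_on \<Omega>) (\<lambda>x. (norm (grad (\<phi> n) x))\<^sup>2))
      \<longlonglongrightarrow> 4 * R\<^sup>2 * integral\<^sup>L (lebesgue_on \<Omega>) (\<lambda>x. (norm (g x))\<^sup>2)"
    using square_integrable_test_fun_grad \<phi> by (intro tendsto_mult_left tendsto_integral_norm_square) auto
  ultimately show ?thesis
    using poincare_test_fun[OF R \<phi>(1)] by (auto intro: LIMSEQ_le)
qed

end

lemma H01_pair_wgradI: "u \<in> H01 \<Omega> \<Longrightarrow> open \<Omega> \<Longrightarrow> H01_pair \<Omega> u (wgrad \<Omega> u)"
  unfolding H01_def using H01_pair_wgrad(1) by blast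

lemma square_integrable_H01:
  assumes "u \<in> H01 \<Omega>" "open \<Omega>"
  shows "square_integrable (lebesgue_on \<Omega>) u" "square_integrable (lebesgue_on \<Omega>) (wgrad \<Omega> u)"
  using H01_pair_square_integrable[OF assms(2) H01_pair_wgradI[OF assms]] by auto

lemma hnorm2_nonneg: "hnorm2 \<Omega> u \<ge> 0"
  unfolding hnorm2_def by (rule integral_nonneg_AE) auto

definition H_inner :: "'a::euclidean_space set \<Rightarrow> ('a \<Rightarrow> real) \<Rightarrow> ('a \<Rightarrow> real) \<Rightarrow> real" where
  "H_inner \<Omega> u v = integral\<^sup>L (lebesgue_on \<Omega>) (\<lambda>x. wgrad \<Omega> u x \<bullet> wgrad \<Omega> v x)"

lemma
  assumes "open \<Omega>" "u \<in> H01 \<Omega>" "v \<in> H01 \<Omega>"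
  shows H01_lincomb: "(\<lambda>x. a * u x + c * v x) \<in> H01 \<Omega>"
    and hnorm2_lincomb: "hnorm2 \<Omega> (\<lambda>x. a * u x + c * v x)
      = a\<^sup>2 * hnorm2 \<Omega> u + 2 * a * c * H_inner \<Omega> u v + c\<^sup>2 * hnorm2 \<Omega> v"
proof -
  have pair: "H01_pair \<Omega> (\<lambda>x. a * u x + c * v x) (\<lambda>x. a *\<^sub>R wgrad \<Omega> u x + c *\<^sub>R wgrad \<Omega> v x)"
    using assms by (intro H01_pair_lincomb H01_pair_wgradI)
  then show "(\<lambda>x. a * u x + c * v x) \<in> H01 \<Omega>" unfolding H01_def by blast
  show "hnorm2 \<Omega> (\<lambda>x. a * u x + c * v x)
      = a\<^sup>2 * hnorm2 \<Omega> u + 2 * a * c * H_inner \<Omega> u v + c\<^sup>2 * hnorm2 \<Omega> v"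
    using H01_pair_wgrad(2)[OF assms(1) pair]
      integral_norm_lincomb_square[OF square_integrable_H01(2)[OF assms(2,1)]
        square_integrable_H01(2)[OF assms(3,1)]]
    by (simp add: hnorm2_def H_inner_def)
qed

lemma Cauchy_Schwarz_H_inner:
  assumes "open \<Omega>" "u \<in> H01 \<Omega>" "v \<in> H01 \<Omega>"
  shows "\<bar>H_inner \<Omega> u v\<bar> \<le> sqrt (hnorm2 \<Omega> u) * sqrt (hnorm2 \<Omega> v)"
  unfolding H_inner_def hnorm2_def using assms
  by (intro Cauchy_Schwarz_integral square_integrable_H01)

lemma poincare_H01:
  assumes "open \<Omega>" "\<And>x. x \<in> \<Omega> \<Longrightarrow> norm x \<le> R" "u \<in> H01 \<Omega>"
  shows "integral\<^sup>L (lebesgue_on \<Omega>) (\<lambda>x. (u x)\<^sup>2) \<le> 4 * R\<^sup>2 * hnorm2 \<Omega> u"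
  using poincare_H01_pair[OF assms(1,2) H01_pair_wgradI[OF assms(3,1)]] by (simp add: hnorm2_def)

lemma hnorm2_pos:
  assumes "open \<Omega>" "bounded \<Omega>" "u \<in> H01 \<Omega>" "\<not> (AE x in lebesgue_on \<Omega>. u x = 0)"
  shows "hnorm2 \<Omega> u > 0"
proof (rule ccontr)
  assume "\<not> hnorm2 \<Omega> u > 0"
  then have "hnorm2 \<Omega> u = 0" using hnorm2_nonneg[of \<Omega> u] by simp
  moreover obtain R where "\<And>x. x \<in> \<Omega> \<Longrightarrow> norm x \<le> R" using assms(2) bounded_iff by blast
  ultimately have "integral\<^sup>L (lebesgue_on \<Omega>) (\<lambda>x. (u x)\<^sup>2) \<le> 0"
    using poincare_H01[OF assms(1) _ assms(3)] by fastforce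
  moreover have "integrable (lebesgue_on \<Omega>) (\<lambda>x. (u x)\<^sup>2)"
    using square_integrable_H01(1)[OF assms(3,1)] by (simp add: square_integrable_def)
  moreover have "integral\<^sup>L (lebesgue_on \<Omega>) (\<lambda>x. (u x)\<^sup>2) \<ge> 0"
    by (rule integral_nonneg_AE) auto
  ultimately have "AE x in lebesgue_on \<Omega>. (u x)\<^sup>2 = 0"
    by (subst integral_nonneg_eq_0_iff_AE[symmetric]) auto
  then have "AE x in lebesgue_on \<Omega>. u x = 0" by eventually_elim simp
  with assms(4) show False by simp
qed

section \<open>The quadratic form Q(u) = ||u||^2 - \<integral> \<eta> u^2\<close>

lemma square_integrable_bounded_mult:
  fixes \<eta> u :: "'x \<Rightarrow> real"
  assumes \<eta>: "\<eta> \<in> borel_measurable M" "AE x in M. \<bar>\<eta> x\<bar> \<le> E"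
    and u: "square_integrable M u"
  shows "square_integrable M (\<lambda>x. \<eta> x * u x)"
    and "integral\<^sup>L M (\<lambda>x. (\<eta> x * u x)\<^sup>2) \<le> E\<^sup>2 * integral\<^sup>L M (\<lambda>x. (u x)\<^sup>2)"
proof -
  have um: "u \<in> borel_measurable M" and ui: "integrable M (\<lambda>x. (u x)\<^sup>2)"
    using u by (auto simp: square_integrable_def)
  have bound: "AE x in M. (\<eta> x * u x)\<^sup>2 \<le> E\<^sup>2 * (u x)\<^sup>2"
    using \<eta>(2)
  proof eventually_elim
    fix x assume "\<bar>\<eta> x\<bar> \<le> E"
    then have "(\<eta> x)\<^sup>2 \<le> E\<^sup>2" by (metis abs_ge_zero power2_abs power_mono)
    then show "(\<eta> x * u x)\<^sup>2 \<le> E\<^sup>2 * (u x)\<^sup>2" by (simp add: power_mult_distrib mult_right_mono)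
  qed
  have i: "integrable M (\<lambda>x. (\<eta> x * u x)\<^sup>2)"
    using \<eta>(1) um bound
    by (intro Bochner_Integration.integrable_bound[OF integrable_mult_right[OF ui, of "E\<^sup>2"]])
      auto
  then show "square_integrable M (\<lambda>x. \<eta> x * u x)"
    using \<eta>(1) um by (simp add: square_integrable_def)
  show "integral\<^sup>L M (\<lambda>x. (\<eta> x * u x)\<^sup>2) \<le> E\<^sup>2 * integral\<^sup>L M (\<lambda>x. (u x)\<^sup>2)"
    using integral_mono_AE[OF i integrable_mult_right[OF ui, of "E\<^sup>2"] bound] by simp
qed

lemma
  fixes \<eta> u v :: "'x \<Rightarrow> real"
  assumes \<eta>: "\<eta> \<in> borel_measurable M" "AE x in M. \<bar>\<eta> x\<bar> \<le> E" "E \<ge> 0"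
    and u: "square_integrable M u" and v: "square_integrable M v"
  shows integrable_weighted_product: "integrable M (\<lambda>x. \<eta> x * u x * v x)"
    and Cauchy_Schwarz_weighted_integral: "\<bar>integral\<^sup>L M (\<lambda>x. \<eta> x * u x * v x)\<bar>
      \<le> E * sqrt (integral\<^sup>L M (\<lambda>x. (u x)\<^sup>2)) * sqrt (integral\<^sup>L M (\<lambda>x. (v x)\<^sup>2))"
proof -
  note \<eta>u = square_integrable_bounded_mult[OF \<eta>(1,2) u]
  show "integrable M (\<lambda>x. \<eta> x * u x * v x)"
    using integrable_inner_square_integrable[OF \<eta>u(1) v] by simp
  have "\<bar>integral\<^sup>L M (\<lambda>x. \<eta> x * u x * v x)\<bar>
      \<le> sqrt (integral\<^sup>L M (\<lambda>x. (\<eta> x * u x)\<^sup>2)) * sqrt (integral\<^sup>L M (\<lambda>x. (v x)\<^sup>2))"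
    using Cauchy_Schwarz_integral[OF \<eta>u(1) v] by simp
  also have "\<dots> \<le> sqrt (E\<^sup>2 * integral\<^sup>L M (\<lambda>x. (u x)\<^sup>2)) * sqrt (integral\<^sup>L M (\<lambda>x. (v x)\<^sup>2))"
    using \<eta>u(2) by (intro mult_right_mono real_sqrt_le_mono) auto
  finally show "\<bar>integral\<^sup>L M (\<lambda>x. \<eta> x * u x * v x)\<bar>
      \<le> E * sqrt (integral\<^sup>L M (\<lambda>x. (u x)\<^sup>2)) * sqrt (integral\<^sup>L M (\<lambda>x. (v x)\<^sup>2))"
    using \<eta>(3) by (simp add: real_sqrt_mult)
qed

lemma integral_weighted_lincomb_square:
  fixes \<eta> u v :: "'x \<Rightarrow> real" and a c :: real
  assumes \<eta>: "\<eta> \<in> borel_measurable M" "AE x in M. \<bar>\<eta> x\<bar> \<le> E" "E \<ge> 0"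
    and u: "square_integrable M u" and v: "square_integrable M v"
  shows "integral\<^sup>L M (\<lambda>x. \<eta> x * (a * u x + c * v x)\<^sup>2)
     = a\<^sup>2 * integral\<^sup>L M (\<lambda>x. \<eta> x * (u x)\<^sup>2) + 2 * a * c * integral\<^sup>L M (\<lambda>x. \<eta> x * u x * v x)
       + c\<^sup>2 * integral\<^sup>L M (\<lambda>x. \<eta> x * (v x)\<^sup>2)"
proof -
  have "(\<lambda>x. \<eta> x * (a * u x + c * v x)\<^sup>2)
      = (\<lambda>x. a\<^sup>2 * (\<eta> x * u x * u x) + 2 * a * c * (\<eta> x * u x * v x) + c\<^sup>2 * (\<eta> x * v x * v x))"
    by (simp add: fun_eq_iff power2_eq_square algebra_simps)
  then show ?thesis
    using integrable_weighted_product[OF \<eta>] u v by (simp add: power2_eq_square mult.assoc)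
qed

lemma LinfE:
  assumes "Linf \<Omega> \<eta>"
  obtains E where "\<eta> \<in> borel_measurable (lebesgue_on \<Omega>)" "AE x in lebesgue_on \<Omega>. \<bar>\<eta> x\<bar> \<le> E" "E \<ge> 0"
proof -
  obtain E where "\<eta> \<in> borel_measurable (lebesgue_on \<Omega>)" "AE x in lebesgue_on \<Omega>. \<bar>\<eta> x\<bar> \<le> E"
    using assms by (auto simp: Linf_def)
  then show thesis by (intro that[of "max E 0"]) auto
qed

definition quad_form :: "'a::euclidean_space set \<Rightarrow> ('a \<Rightarrow> real) \<Rightarrow> ('a \<Rightarrow> real) \<Rightarrow> real" where
  "quad_form \<Omega> \<eta> u = hnorm2 \<Omega> u - integral\<^sup>L (lebesgue_on \<Omega>) (\<lambda>x. \<eta> x * (u x)\<^sup>2)"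

lemma setA_quad_form: "setA \<Omega> \<eta> = {u \<in> H01 \<Omega>. quad_form \<Omega> \<eta> u < 0}"
  by (auto simp: setA_def quad_form_def)

lemma quad_form_lincomb:
  assumes "open \<Omega>" "Linf \<Omega> \<eta>" "u \<in> H01 \<Omega>" "v \<in> H01 \<Omega>"
  shows "quad_form \<Omega> \<eta> (\<lambda>x. a * u x + c * v x) = a\<^sup>2 * quad_form \<Omega> \<eta> u
    + 2 * a * c * (H_inner \<Omega> u v - integral\<^sup>L (lebesgue_on \<Omega>) (\<lambda>x. \<eta> x * u x * v x))
    + c\<^sup>2 * quad_form \<Omega> \<eta> v"
proof -
  obtain E where \<eta>: "\<eta> \<in> borel_measurable (lebesgue_on \<Omega>)"
    "AE x in lebesgue_on \<Omega>. \<bar>\<eta> x\<bar> \<le> E" "E \<ge> 0" using LinfE[OF assms(2)] .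
  show ?thesis
    using hnorm2_lincomb[OF assms(1,3,4)]
      integral_weighted_lincomb_square[OF \<eta> square_integrable_H01(1)[OF assms(3,1)]
        square_integrable_H01(1)[OF assms(4,1)]]
    by (simp add: quad_form_def algebra_simps)
qed

lemma quad_form_add_estimate:
  assumes \<Omega>: "open \<Omega>" and \<eta>: "\<eta> \<in> borel_measurable (lebesgue_on \<Omega>)"
    "AE x in lebesgue_on \<Omega>. \<bar>\<eta> x\<bar> \<le> E" "E \<ge> 0"
    and C: "C \<ge> 0" "\<And>w. w \<in> H01 \<Omega> \<Longrightarrow> integral\<^sup>L (lebesgue_on \<Omega>) (\<lambda>x. (w x)\<^sup>2) \<le> C * hnorm2 \<Omega> w"
    and u: "u \<in> H01 \<Omega>" and w: "w \<in> H01 \<Omega>"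
  shows "\<bar>quad_form \<Omega> \<eta> (\<lambda>x. u x + w x) - quad_form \<Omega> \<eta> u\<bar>
    \<le> 2 * (sqrt (hnorm2 \<Omega> u) + E * sqrt (integral\<^sup>L (lebesgue_on \<Omega>) (\<lambda>x. (u x)\<^sup>2)) * sqrt C)
        * sqrt (hnorm2 \<Omega> w) + (1 + E * C) * hnorm2 \<Omega> w"
proof -
  have "Linf \<Omega> \<eta>" using \<eta> by (auto simp: Linf_def)
  define hu where "hu = hnorm2 \<Omega> u"
  define hw where "hw = hnorm2 \<Omega> w"
  define Iu where "Iu = integral\<^sup>L (lebesgue_on \<Omega>) (\<lambda>x. (u x)\<^sup>2)"
  define Iw where "Iw = integral\<^sup>L (lebesgue_on \<Omega>) (\<lambda>x. (w x)\<^sup>2)"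
  define b where "b = integral\<^sup>L (lebesgue_on \<Omega>) (\<lambda>x. \<eta> x * u x * w x)"
  have Iw: "Iw \<le> C * hw" unfolding Iw_def hw_def using C(2)[OF w] .
  have Iu0: "Iu \<ge> 0" and Iw0: "Iw \<ge> 0" unfolding Iu_def Iw_def by (auto intro: integral_nonneg_AE)
  have hw0: "hw \<ge> 0" unfolding hw_def by (rule hnorm2_nonneg)
  have weighted: "\<bar>integral\<^sup>L (lebesgue_on \<Omega>) (\<lambda>x. \<eta> x * a x * c x)\<bar>
      \<le> E * sqrt (integral\<^sup>L (lebesgue_on \<Omega>) (\<lambda>x. (a x)\<^sup>2))
        * sqrt (integral\<^sup>L (lebesgue_on \<Omega>) (\<lambda>x. (c x)\<^sup>2))" if "a \<in> H01 \<Omega>" "c \<in> H01 \<Omega>" for a c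
    using Cauchy_Schwarz_weighted_integral[OF \<eta> square_integrable_H01(1)[OF that(1) \<Omega>]
        square_integrable_H01(1)[OF that(2) \<Omega>]] .
  have "quad_form \<Omega> \<eta> (\<lambda>x. u x + w x) - quad_form \<Omega> \<eta> u
      = 2 * H_inner \<Omega> u w - 2 * b + quad_form \<Omega> \<eta> w"
    using quad_form_lincomb[OF \<Omega> \<open>Linf \<Omega> \<eta>\<close> u w, of 1 1] by (simp add: b_def)
  then have "\<bar>quad_form \<Omega> \<eta> (\<lambda>x. u x + w x) - quad_form \<Omega> \<eta> u\<bar>
      \<le> 2 * \<bar>H_inner \<Omega> u w\<bar> + 2 * \<bar>b\<bar> + \<bar>quad_form \<Omega> \<eta> w\<bar>"
    by linarith
  moreover have "\<bar>H_inner \<Omega> u w\<bar> \<le> sqrt hu * sqrt hw"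
    using Cauchy_Schwarz_H_inner[OF \<Omega> u w] by (simp add: hu_def hw_def)
  moreover have "\<bar>b\<bar> \<le> E * sqrt Iu * sqrt C * sqrt hw"
  proof -
    have "\<bar>b\<bar> \<le> E * sqrt Iu * sqrt Iw" using weighted[OF u w] by (simp add: b_def Iu_def Iw_def)
    also have "\<dots> \<le> E * sqrt Iu * sqrt (C * hw)"
      using Iw \<eta>(3) Iu0 by (intro mult_left_mono real_sqrt_le_mono) auto
    finally show ?thesis by (simp add: real_sqrt_mult mult.assoc)
  qed
  moreover have "\<bar>quad_form \<Omega> \<eta> w\<bar> \<le> (1 + E * C) * hw"
  proof -
    have "\<bar>integral\<^sup>L (lebesgue_on \<Omega>) (\<lambda>x. \<eta> x * (w x)\<^sup>2)\<bar> \<le> E * Iw"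
      using weighted[OF w w] Iw0 by (simp add: Iw_def power2_eq_square mult.assoc)
    also have "\<dots> \<le> E * (C * hw)" using mult_left_mono[OF Iw \<eta>(3)] .
    finally show ?thesis
      using hw0 \<eta>(3) C(1) unfolding quad_form_def hw_def[symmetric] by (simp add: abs_le_iff algebra_simps)
  qed
  moreover have "2 * (sqrt hu + E * sqrt Iu * sqrt C) * sqrt hw + (1 + E * C) * hw
      = 2 * (sqrt hu * sqrt hw) + 2 * (E * sqrt Iu * sqrt C * sqrt hw) + (1 + E * C) * hw"
    by (simp add: algebra_simps)
  ultimately show ?thesis unfolding hu_def[symmetric] hw_def[symmetric] Iu_def[symmetric] by linarith
qed

lemma quad_form_continuous:
  assumes \<Omega>: "open \<Omega>" "bounded \<Omega>" and "Linf \<Omega> \<eta>" and u: "u \<in> H01 \<Omega>" and "\<epsilon> > 0"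
  shows "\<exists>\<delta>>0. \<forall>v\<in>H01 \<Omega>. hnorm2 \<Omega> (\<lambda>x. v x - u x) < \<delta>
      \<longrightarrow> \<bar>quad_form \<Omega> \<eta> v - quad_form \<Omega> \<eta> u\<bar> < \<epsilon>"
proof -
  obtain E where \<eta>: "\<eta> \<in> borel_measurable (lebesgue_on \<Omega>)"
    "AE x in lebesgue_on \<Omega>. \<bar>\<eta> x\<bar> \<le> E" "E \<ge> 0" using LinfE[OF \<open>Linf \<Omega> \<eta>\<close>] .
  obtain R where "\<And>x. x \<in> \<Omega> \<Longrightarrow> norm x \<le> R" using \<Omega>(2) bounded_iff by blast
  note C = poincare_H01[OF \<Omega>(1) this]
  define K1 where "K1 = 2 * (sqrt (hnorm2 \<Omega> u)
    + E * sqrt (integral\<^sup>L (lebesgue_on \<Omega>) (\<lambda>x. (u x)\<^sup>2)) * sqrt (4 * R\<^sup>2))"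
  define K2 where "K2 = 1 + E * (4 * R\<^sup>2)"
  have "integral\<^sup>L (lebesgue_on \<Omega>) (\<lambda>x. (u x)\<^sup>2) \<ge> 0" by (rule integral_nonneg_AE) auto
  then have K: "K1 \<ge> 0" "K2 \<ge> 0"
    unfolding K1_def K2_def using \<eta>(3) hnorm2_nonneg[of \<Omega> u] by auto
  define \<delta> where "\<delta> = min 1 ((\<epsilon> / (K1 + K2 + 1))\<^sup>2)"
  have "\<bar>quad_form \<Omega> \<eta> v - quad_form \<Omega> \<eta> u\<bar> < \<epsilon>"
    if v: "v \<in> H01 \<Omega>" and vu: "hnorm2 \<Omega> (\<lambda>x. v x - u x) < \<delta>" for v
  proof -
    define w where "w x = v x - u x" for x
    have w: "w \<in> H01 \<Omega>" using H01_lincomb[OF \<Omega>(1) v u, of 1 "-1"] by (simp add: w_def[abs_def])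
    define r where "r = sqrt (hnorm2 \<Omega> w)"
    have hw: "hnorm2 \<Omega> w < 1" "hnorm2 \<Omega> w < (\<epsilon> / (K1 + K2 + 1))\<^sup>2"
      using vu by (simp_all add: \<delta>_def w_def[abs_def])
    have r: "0 \<le> r" "r < 1" "r < \<epsilon> / (K1 + K2 + 1)"
      using hw real_sqrt_less_mono[OF hw(2)] \<open>\<epsilon> > 0\<close> K hnorm2_nonneg[of \<Omega> w]
      by (simp_all add: r_def)
    have "\<bar>quad_form \<Omega> \<eta> v - quad_form \<Omega> \<eta> u\<bar> \<le> K1 * r + K2 * r\<^sup>2"
      using quad_form_add_estimate[OF \<Omega>(1) \<eta> _ C u w] hnorm2_nonneg[of \<Omega> w]
      by (simp add: w_def K1_def K2_def r_def)
    also have "\<dots> \<le> (K1 + K2 + 1) * r"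
    proof -
      have "r\<^sup>2 \<le> r" using r by (simp add: power2_eq_square mult_left_le)
      then show ?thesis using mult_left_mono[of "r\<^sup>2" r K2] r(1) K by (simp add: algebra_simps)
    qed
    also have "\<dots> < \<epsilon>" using r K by (simp add: field_simps)
    finally show ?thesis .
  qed
  moreover have "\<delta> > 0" using \<open>\<epsilon> > 0\<close> K by (simp add: \<delta>_def)
  ultimately show ?thesis by blast
qed

section \<open>The set A\<close>

lemma H_open_setA:
  assumes "open \<Omega>" "bounded \<Omega>" "Linf \<Omega> \<eta>"
  shows "H_open \<Omega> (setA \<Omega> \<eta>)"
  unfolding H_open_def
proof (intro conjI ballI)
  fix u assume "u \<in> setA \<Omega> \<eta>"
  then have u: "u \<in> H01 \<Omega>" "quad_form \<Omega> \<eta> u < 0" by (auto simp: setA_quad_form)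
  then obtain \<delta> where "\<delta> > 0" and \<delta>: "\<forall>v\<in>H01 \<Omega>. hnorm2 \<Omega> (\<lambda>x. v x - u x) < \<delta>
      \<longrightarrow> \<bar>quad_form \<Omega> \<eta> v - quad_form \<Omega> \<eta> u\<bar> < - quad_form \<Omega> \<eta> u"
    using quad_form_continuous[OF assms u(1), of "- quad_form \<Omega> \<eta> u"] by auto
  then show "\<exists>e>0. \<forall>v\<in>H01 \<Omega>. hnorm2 \<Omega> (\<lambda>x. v x - u x) < e \<longrightarrow> v \<in> setA \<Omega> \<eta>"
    by (auto simp: setA_quad_form abs_less_iff)
qed (auto simp: setA_def)

text \<open>The sign of t makes the cross term of Q(u + t u0) nonpositive.\<close>
lemma quad_form_zero_approximable:
  assumes \<Omega>: "open \<Omega>" and \<eta>: "Linf \<Omega> \<eta>" and u0: "u0 \<in> H01 \<Omega>" "quad_form \<Omega> \<eta> u0 < 0"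
    and u: "u \<in> H01 \<Omega>" "quad_form \<Omega> \<eta> u = 0" and "e > 0"
  shows "\<exists>v\<in>setA \<Omega> \<eta>. hnorm2 \<Omega> (\<lambda>x. v x - u x) < e"
proof -
  define h where "h = hnorm2 \<Omega> u0"
  define b where "b = H_inner \<Omega> u u0 - integral\<^sup>L (lebesgue_on \<Omega>) (\<lambda>x. \<eta> x * u x * u0 x)"
  define t where "t = (if b \<ge> 0 then -1 else 1) * sqrt (e / (h + 1))"
  have h: "h \<ge> 0" by (simp add: h_def hnorm2_nonneg)
  have tb: "t * b \<le> 0"
    using real_sqrt_ge_zero[of "e / (h + 1)"] \<open>e > 0\<close> h
    by (auto simp: t_def intro: mult_nonneg_nonneg mult_nonneg_nonpos)
  have t2: "t\<^sup>2 = e / (h + 1)" using \<open>e > 0\<close> h by (simp add: t_def power_mult_distrib)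
  have "quad_form \<Omega> \<eta> (\<lambda>x. 1 * u x + t * u0 x) = 2 * t * b + t\<^sup>2 * quad_form \<Omega> \<eta> u0"
    using quad_form_lincomb[OF \<Omega> \<eta> u(1) u0(1), of 1 t] u(2) by (simp add: b_def)
  also have "\<dots> < 0"
  proof -
    have "t\<^sup>2 > 0" using t2 \<open>e > 0\<close> h by simp
    then have "t\<^sup>2 * quad_form \<Omega> \<eta> u0 < 0" using u0(2) by (rule mult_pos_neg)
    then show ?thesis using tb by linarith
  qed
  finally have inA: "(\<lambda>x. u x + t * u0 x) \<in> setA \<Omega> \<eta>"
    using H01_lincomb[OF \<Omega> u(1) u0(1), of 1 t] by (simp add: setA_quad_form)
  have "hnorm2 \<Omega> (\<lambda>x. (u x + t * u0 x) - u x) = t\<^sup>2 * h"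
    using hnorm2_lincomb[OF \<Omega> u0(1) u0(1), of t 0] by (simp add: h_def)
  also have "\<dots> = e * (h / (h + 1))" using t2 by simp
  also have "\<dots> < e" using h \<open>e > 0\<close> by (simp add: field_simps)
  finally show ?thesis using inA by (intro bexI[of _ "\<lambda>x. u x + t * u0 x"]) auto
qed

lemma H_boundary_setA:
  assumes \<Omega>: "open \<Omega>" "bounded \<Omega>" and \<eta>: "Linf \<Omega> \<eta>"
    and u0: "u0 \<in> H01 \<Omega>" "quad_form \<Omega> \<eta> u0 < 0"
  shows "H_boundary \<Omega> (setA \<Omega> \<eta>) = {u \<in> H01 \<Omega>. quad_form \<Omega> \<eta> u = 0}"
proof (intro set_eqI iffI)
  fix u assume "u \<in> H_boundary \<Omega> (setA \<Omega> \<eta>)"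
  then have cl: "u \<in> H_closure \<Omega> (setA \<Omega> \<eta>)" and ni: "u \<notin> H_interior \<Omega> (setA \<Omega> \<eta>)"
    by (auto simp: H_boundary_def)
  have u: "u \<in> H01 \<Omega>" using cl by (simp add: H_closure_def)
  have "\<not> quad_form \<Omega> \<eta> u < 0"
  proof
    assume "quad_form \<Omega> \<eta> u < 0"
    then have "u \<in> setA \<Omega> \<eta>" using u by (simp add: setA_quad_form)
    then have "u \<in> H_interior \<Omega> (setA \<Omega> \<eta>)"
      using H_open_setA[OF \<Omega> \<eta>] unfolding H_open_def H_interior_def by blast
    with ni show False ..
  qed
  moreover have "\<not> quad_form \<Omega> \<eta> u > 0"
  proof
    assume pos: "quad_form \<Omega> \<eta> u > 0"
    obtain \<delta> where "\<delta> > 0" and \<delta>: "\<forall>v\<in>H01 \<Omega>. hnorm2 \<Omega> (\<lambda>x. v x - u x) < \<delta>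
        \<longrightarrow> \<bar>quad_form \<Omega> \<eta> v - quad_form \<Omega> \<eta> u\<bar> < quad_form \<Omega> \<eta> u"
      using quad_form_continuous[OF \<Omega> \<eta> u pos] by auto
    with cl obtain v where "v \<in> setA \<Omega> \<eta>" "hnorm2 \<Omega> (\<lambda>x. v x - u x) < \<delta>"
      unfolding H_closure_def by blast
    with \<delta> show False by (auto simp: setA_quad_form abs_less_iff)
  qed
  ultimately show "u \<in> {u \<in> H01 \<Omega>. quad_form \<Omega> \<eta> u = 0}" using u by simp
next
  fix u assume "u \<in> {u \<in> H01 \<Omega>. quad_form \<Omega> \<eta> u = 0}"
  then have u: "u \<in> H01 \<Omega>" "quad_form \<Omega> \<eta> u = 0" by auto
  then show "u \<in> H_boundary \<Omega> (setA \<Omega> \<eta>)"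
    using quad_form_zero_approximable[OF \<Omega>(1) \<eta> u0 u]
    by (simp add: H_boundary_def H_closure_def H_interior_def setA_quad_form)
qed

lemma unit_sphere_Int_setA_nonempty:
  assumes \<Omega>: "open \<Omega>" "bounded \<Omega>" and \<eta>: "Linf \<Omega> \<eta>"
    and u0: "u0 \<in> H01 \<Omega>" "quad_form \<Omega> \<eta> u0 < 0"
  shows "unit_sphere \<Omega> \<inter> setA \<Omega> \<eta> \<noteq> {}"
proof -
  have "\<not> (AE x in lebesgue_on \<Omega>. u0 x = 0)"
  proof
    assume "AE x in lebesgue_on \<Omega>. u0 x = 0"
    then have "integral\<^sup>L (lebesgue_on \<Omega>) (\<lambda>x. \<eta> x * (u0 x)\<^sup>2) = 0"
      by (intro integral_eq_zero_AE) auto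
    then show False using u0(2) hnorm2_nonneg[of \<Omega> u0] by (simp add: quad_form_def)
  qed
  then have h: "hnorm2 \<Omega> u0 > 0" using hnorm2_pos[OF \<Omega> u0(1)] by blast
  define c where "c = 1 / sqrt (hnorm2 \<Omega> u0)"
  have "hnorm2 \<Omega> (\<lambda>x. c * u0 x + 0 * u0 x) = 1"
    using hnorm2_lincomb[OF \<Omega>(1) u0(1) u0(1), of c 0] h by (simp add: c_def power_divide)
  moreover have "quad_form \<Omega> \<eta> (\<lambda>x. c * u0 x + 0 * u0 x) < 0"
    using quad_form_lincomb[OF \<Omega>(1) \<eta> u0(1) u0(1), of c 0] h u0(2)
    by (simp add: c_def mult_pos_neg)
  ultimately have "(\<lambda>x. c * u0 x + 0 * u0 x) \<in> unit_sphere \<Omega> \<inter> setA \<Omega> \<eta>"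
    using H01_lincomb[OF \<Omega>(1) u0(1) u0(1), of c 0] by (simp add: unit_sphere_def setA_quad_form)
  then show ?thesis by blast
qed

lemma eig_aux_less_1_imp_pos_eig:
  assumes "eig_aux \<Omega> \<theta> k < 1"
  obtains l where "l \<in> pos_eigs \<Omega> \<theta>" "l < 1"
  using assms by (cases k) (auto simp: Inf_less_iff)

lemma quad_form_eigenfunction_neg:
  assumes \<Omega>: "open \<Omega>" "bounded \<Omega>" and l: "l \<in> pos_eigs \<Omega> \<eta>" "l < 1"
  obtains u0 where "u0 \<in> H01 \<Omega>" "quad_form \<Omega> \<eta> u0 < 0"
proof -
  obtain u0 where u0: "u0 \<in> H01 \<Omega>" "\<not> (AE x in lebesgue_on \<Omega>. u0 x = 0)"
    "integral\<^sup>L (lebesgue_on \<Omega>) (\<lambda>x. wgrad \<Omega> u0 x \<bullet> wgrad \<Omega> u0 x)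
       = l * integral\<^sup>L (lebesgue_on \<Omega>) (\<lambda>x. \<eta> x * u0 x * u0 x)"
    using l(1) unfolding pos_eigs_def is_eigenvalue_def by blast
  have "l > 0" using l(1) by (simp add: pos_eigs_def)
  let ?J = "integral\<^sup>L (lebesgue_on \<Omega>) (\<lambda>x. \<eta> x * (u0 x)\<^sup>2)"
  have "hnorm2 \<Omega> u0 = integral\<^sup>L (lebesgue_on \<Omega>) (\<lambda>x. wgrad \<Omega> u0 x \<bullet> wgrad \<Omega> u0 x)"
    unfolding hnorm2_def power2_norm_eq_inner ..
  then have eig: "hnorm2 \<Omega> u0 = l * ?J" using u0(3) by (simp add: power2_eq_square mult.assoc)
  then have "?J > 0" using hnorm2_pos[OF \<Omega> u0(1,2)] \<open>l > 0\<close> by (simp add: zero_less_mult_iff)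
  then have "quad_form \<Omega> \<eta> u0 < 0" using eig l(2) by (simp add: quad_form_def mult_less_cancel_right1)
  with u0(1) show thesis by (rule that)
qed

lemma strict_mono_quotient_less_limit:
  fixes g :: "real \<Rightarrow> real"
  assumes inc: "\<forall>s t. 0 < s \<and> s < t \<longrightarrow> g s / s < g t / t"
    and dec: "\<forall>s t. s < t \<and> t < 0 \<longrightarrow> g s / s > g t / t"
    and lim: "((\<lambda>t. g t / t) \<longlongrightarrow> L) at_infinity" and t: "t \<noteq> 0"
  shows "g t / t < L"
proof (cases "t > 0")
  case True
  have "g (2 * t) / (2 * t) \<le> L"
  proof (rule tendsto_lowerbound[OF filterlim_mono[OF lim order_refl at_top_le_at_infinity]])
    show "\<forall>\<^sub>F s in at_top. g (2 * t) / (2 * t) \<le> g s / s"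
      unfolding eventually_at_top_linorder using True inc
      by (intro exI[of _ "2 * t + 1"]) (auto intro!: less_imp_le)
  qed simp
  moreover have "g t / t < g (2 * t) / (2 * t)" using inc True by auto
  ultimately show ?thesis by linarith
next
  case False
  then have "t < 0" using t by simp
  have "g (2 * t) / (2 * t) \<le> L"
  proof (rule tendsto_lowerbound[OF filterlim_mono[OF lim order_refl at_bot_le_at_infinity]])
    show "\<forall>\<^sub>F s in at_bot. g (2 * t) / (2 * t) \<le> g s / s"
      unfolding eventually_at_bot_linorder using \<open>t < 0\<close> dec
      by (intro exI[of _ "2 * t - 1"]) (auto intro!: less_imp_le)
  qed simp
  moreover have "g t / t < g (2 * t) / (2 * t)" using dec \<open>t < 0\<close> by auto
  ultimately show ?thesis by linarith
qed

lemma integral_pos_AE: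
  fixes f :: "'x \<Rightarrow> real"
  assumes "integrable M f" "AE x in M. 0 \<le> f x" "\<not> (AE x in M. f x = 0)"
  shows "integral\<^sup>L M f > 0"
  using assms integral_nonneg_AE[OF assms(2)] integral_nonneg_eq_0_iff_AE[OF assms(1,2)] by linarith

lemma nehari_subset_setA:
  assumes \<Omega>: "open \<Omega>" "bounded \<Omega>" and \<eta>: "Linf \<Omega> \<eta>"
    and f: "AE x in lebesgue_on \<Omega>.
              (\<forall>s t. 0 < s \<and> s < t \<longrightarrow> f x s / s < f x t / t) \<and>
              (\<forall>s t. s < t \<and> t < 0 \<longrightarrow> f x s / s > f x t / t) \<and>
              ((\<lambda>t. f x t / t) \<longlongrightarrow> \<eta> x) at_infinity"
  shows "nehari \<Omega> f \<subseteq> setA \<Omega> \<eta>"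
proof
  fix u assume "u \<in> nehari \<Omega> f"
  then have u: "u \<in> H01 \<Omega>" "\<not> (AE x in lebesgue_on \<Omega>. u x = 0)"
    and hn: "hnorm2 \<Omega> u = integral\<^sup>L (lebesgue_on \<Omega>) (\<lambda>x. f x (u x) * u x)"
    by (auto simp: nehari_def)
  obtain E where E: "\<eta> \<in> borel_measurable (lebesgue_on \<Omega>)"
    "AE x in lebesgue_on \<Omega>. \<bar>\<eta> x\<bar> \<le> E" "E \<ge> 0" using LinfE[OF \<eta>] .
  define D where "D x = \<eta> x * (u x)\<^sup>2 - f x (u x) * u x" for x
  txt \<open>A nonintegrable right-hand side would make the Nehari identity read hnorm2 u = 0.\<close>
  have "integrable (lebesgue_on \<Omega>) (\<lambda>x. f x (u x) * u x)"
    using hnorm2_pos[OF \<Omega> u] hn not_integrable_integral_eq by fastforce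
  moreover have "integrable (lebesgue_on \<Omega>) (\<lambda>x. \<eta> x * (u x)\<^sup>2)"
    using integrable_weighted_product[OF E square_integrable_H01(1)[OF u(1) \<Omega>(1)]
        square_integrable_H01(1)[OF u(1) \<Omega>(1)]]
    by (simp add: power2_eq_square mult.assoc)
  moreover have pointwise: "AE x in lebesgue_on \<Omega>. 0 \<le> D x \<and> (u x \<noteq> 0 \<longrightarrow> 0 < D x)"
    using f
  proof eventually_elim
    case (elim x)
    show ?case
    proof (cases "u x = 0")
      case False
      then have "f x (u x) / u x * (u x)\<^sup>2 < \<eta> x * (u x)\<^sup>2"
        using elim by (intro mult_strict_right_mono strict_mono_quotient_less_limit) auto
      then show ?thesis using False by (simp add: D_def power2_eq_square)
    qed (simp add: D_def)
  qed
  moreover have "\<not> (AE x in lebesgue_on \<Omega>. D x = 0)"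
  proof
    assume "AE x in lebesgue_on \<Omega>. D x = 0"
    with pointwise have "AE x in lebesgue_on \<Omega>. u x = 0" by eventually_elim auto
    with u(2) show False ..
  qed
  ultimately have "integral\<^sup>L (lebesgue_on \<Omega>) D > 0"
    by (intro integral_pos_AE) (auto simp: D_def[abs_def])
  then show "u \<in> setA \<Omega> \<eta>"
    using u(1) hn \<open>integrable _ (\<lambda>x. f x (u x) * u x)\<close> \<open>integrable _ (\<lambda>x. \<eta> x * (u x)\<^sup>2)\<close>
    by (simp add: setA_def D_def[abs_def])
qed

theorem lemma2p1:
  fixes \<Omega> :: "'a::euclidean_space set"
    and f :: "'a \<Rightarrow> real \<Rightarrow> real"
    and \<alpha> \<eta> :: "'a \<Rightarrow> real"
  assumes dom: "smooth_bounded_domain \<Omega>"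
    and carath: "caratheodory \<Omega> f"
    and f1: "AE x in lebesgue_on \<Omega>.
              (\<forall>s t. 0 < s \<and> s < t \<longrightarrow> f x s / s < f x t / t) \<and>
              (\<forall>s t. s < t \<and> t < 0 \<longrightarrow> f x s / s > f x t / t) \<and>
              ((\<lambda>t. f x t / t) \<longlongrightarrow> \<alpha> x) (at 0) \<and> \<alpha> x \<ge> 0 \<and>
              ((\<lambda>t. f x t / t) \<longlongrightarrow> \<eta> x) at_infinity"
    and alpha_Linf: "Linf \<Omega> \<alpha>"
    and eta_Linf: "Linf \<Omega> \<eta>"
    and f2: "\<exists>m\<ge>1. lambda_eig \<Omega> \<eta> m < 1 \<and> 1 < lambda_eig \<Omega> \<alpha> 1"
  shows "H_open \<Omega> (setA \<Omega> \<eta>) \<and> setA \<Omega> \<eta> \<noteq> {} \<and>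
         H_boundary \<Omega> (setA \<Omega> \<eta>) =
           {u \<in> H01 \<Omega>. hnorm2 \<Omega> u = integral\<^sup>L (lebesgue_on \<Omega>) (\<lambda>x. \<eta> x * (u x)^2)} \<and>
         H01 \<Omega> - setA \<Omega> \<eta> =
           {u \<in> H01 \<Omega>. hnorm2 \<Omega> u \<ge> integral\<^sup>L (lebesgue_on \<Omega>) (\<lambda>x. \<eta> x * (u x)^2)} \<and>
         nehari \<Omega> f \<subseteq> setA \<Omega> \<eta> \<and>
         unit_sphere \<Omega> \<inter> setA \<Omega> \<eta> \<noteq> {}"
proof -
  have \<Omega>: "open \<Omega>" "bounded \<Omega>" using dom by (auto simp: smooth_bounded_domain_def)
  obtain m where "lambda_eig \<Omega> \<eta> m < 1" using f2 by blast
  then obtain l where "l \<in> pos_eigs \<Omega> \<eta>" "l < 1"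
    unfolding lambda_eig_def by (rule eig_aux_less_1_imp_pos_eig)
  then obtain u0 where u0: "u0 \<in> H01 \<Omega>" "quad_form \<Omega> \<eta> u0 < 0"
    using quad_form_eigenfunction_neg[OF \<Omega>] by blast
  have "nehari \<Omega> f \<subseteq> setA \<Omega> \<eta>"
    using f1 by (intro nehari_subset_setA[OF \<Omega> eta_Linf]) auto
  moreover have "H_boundary \<Omega> (setA \<Omega> \<eta>) = {u \<in> H01 \<Omega>. quad_form \<Omega> \<eta> u = 0}"
    using H_boundary_setA[OF \<Omega> eta_Linf u0] .
  ultimately show ?thesis
    using H_open_setA[OF \<Omega> eta_Linf] unit_sphere_Int_setA_nonempty[OF \<Omega> eta_Linf u0] u0
    by (auto simp: setA_quad_form quad_form_def)
qed

end
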